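(* Let $(H,\cdot,1,\Delta,\epsilon,S,\rightharpoonup)$ be a Yetter--Drinfeld post-Hopf algebra with subadjacent Hopf algebra $H_\rightharpoonup=(H,\bullet_\rightharpoonup,1,\Delta,\epsilon,S_\rightharpoonup)$. Then $H$, with left $H_\rightharpoonup$-action $\rightharpoonup$ and left $H_\rightharpoonup$-coaction $\mathrm{Ad}_L(a)=(a_1\bullet_\rightharpoonup S_\rightharpoonup(a_3))\otimes a_2$, is a left-left Yetter--Drinfeld module over $H_\rightharpoonup$; moreover $(H,\cdot,1,\Delta,\epsilon,S)$ is a Hopf monoid in the braided monoidal category ${}^{H_\rightharpoonup}_{H_\rightharpoonup}\mathcal{YD}$ of left-left Yetter--Drinfeld modules over $H_\rightharpoonup$. The braiding on $H\otimes H$ is $a\otimes b\mapsto \alpha_\rightharpoonup(a_1)\big(\beta_\rightharpoonup(a_3)(b)\big)\otimes a_2$.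
   Context: Conventions: $\Bbbk$ is a field; algebras are associative unital, coalgebras coassociative counital; Sweedler notation $\Delta(c)=c_1\otimes c_2$ (summation omitted), iterated as $c_1\otimes c_2\otimes c_3$ etc.; $H\otimes H$ carries the tensor product coalgebra structure. Definition (Yetter--Drinfeld post-Hopf algebra). A tuple $(H,\cdot,1,\Delta,\epsilon,S,\rightharpoonup)$ where $(H,\cdot,1)$ is an algebra, $(H,\Delta,\epsilon)$ is a coalgebra on the same vector space, $S:H\to H$ is linear with $x_1\cdot S(x_2)=S(x_1)\cdot x_2=\epsilon(x)1$ for all $x$, and $\rightharpoonup:H\otimes H\to H$ is a coalgebra morphism, such that for all $x,y,z\in H$: (P1) $x\rightharpoonup(y\cdot z)=(x_1\rightharpoonup y)\cdot(x_2\rightharpoonup z)$; (P2) $x\rightharpoonup(y\rightharpoonup z)=\big(x_1\cdot(x_2\rightharpoonup y)\big)\rightharpoonup z$; (P3) the map $\alpha_\rightharpoonup:H\to\mathrm{End}(H)$, $\alpha_\rightharpoonup(x)(y)=x\rightharpoonup y$, is convolution invertible, i.e. there is $\beta_\rightharpoonup:H\to\mathrm{End}(H)$ with $\alpha_\rightharpoonup(x_1)\circ\beta_\rightharpoonup(x_2)=\beta_\rightharpoonup(x_1)\circ\alpha_\rightharpoonup(x_2)=\epsilon(x)\mathrm{Id}_H$; (P4) $\epsilon(a\cdot b)=\epsilon(a)\epsilon(b)$, $\epsilon(1)=1_\Bbbk$, $\Delta(1)=1\otimes 1$; (P5) $\Delta(x\cdot y)=\Big(x_1\cdot\alpha_\rightharpoonup(x_2)\big(\beta_\rightharpoonup(x_4)(y_1)\big)\Big)\otimes(x_3\cdot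 y_2)$; (P6) setting $x\bullet_\rightharpoonup y:=x_1\cdot(x_2\rightharpoonup y)$, $S_\rightharpoonup(x):=\beta_\rightharpoonup(x_1)(S(x_2))$ and $x\leftharpoonup y:=\big(S_\rightharpoonup(x_1\rightharpoonup y_1)\bullet_\rightharpoonup x_2\big)\bullet_\rightharpoonup y_2$, one has $\Delta(S_\rightharpoonup(x))=S_\rightharpoonup(x_2)\otimes S_\rightharpoonup(x_1)$ and $(x_1\rightharpoonup y_1)\otimes(x_2\leftharpoonup y_2)=(x_2\rightharpoonup y_2)\otimes(x_1\leftharpoonup y_1)$. Fact: $H_\rightharpoonup=(H,\bullet_\rightharpoonup,1,\Delta,\epsilon,S_\rightharpoonup)$ is a Hopf algebra (the subadjacent Hopf algebra). Yetter--Drinfeld modules: for a Hopf algebra $A$ with antipode $T$, a left-left Yetter--Drinfeld module is a left $A$-module $(V,\triangleright)$ and left $A$-comodule $\rho(v)=v_{-1}\otimes v_0$ with $\rho(a\triangleright v)=a_1v_{-1}T(a_3)\otimes a_2\triangleright v_0$; these form the braided monoidal category ${}^A_A\mathcal{YD}$ (diagonal action and coaction on tensor products) with braiding $\sigma(v\otimes w)=v_{-1}\triangleright w\otimes v_0$. A bimonoid in ${}^A_A\mathcal{YD}$ is an object $K$ with algebra $(m,u)$ and coalgebra $(\Delta,\epsilon)$ structures whose structure maps are module and comodule morphisms, with $\epsilon$ and $u$ compatible ($\epsilon$ multiplicative, $\epsilon(1)=1$, $\Delta(1)=1\otimes1$) and $\Delta\circ m=(m\otimes m)(\mathrm{Id}\otimes\sigma\otimes\mathrm{Id})(\Delta\otimes\Delta)$;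 it is a Hopf monoid if moreover $\mathrm{Id}_K$ has a convolution inverse $S_K$ (the antipode). *)

theory Defs
  imports Complex_Main
begin

text \<open>An element of H (x) H is represented by a finite list of pairs (a finite sum of pure
  tensors; scalars are absorbed into the first factor); H (x) H (x) H likewise by lists
  of triples.  Two such representatives denote the same tensor iff all bilinear
  (resp. trilinear) forms into 'k agree on them (valid since 'k is a field).
  The coproduct is a map cop :: 'h => ('h * 'h) list, the Sweedler representative of
  Delta(x).\<close>

definition lin :: "('k::field \<Rightarrow> 'a::ab_group_add \<Rightarrow> 'a) \<Rightarrow> ('k \<Rightarrow> 'b::ab_group_add \<Rightarrow> 'b)
    \<Rightarrow> ('a \<Rightarrow> 'b) \<Rightarrow> bool" where
  "lin s1 s2 f \<longleftrightarrow> (\<forall>x y. f (x + y) = f x + f y) \<and> (\<forall>c x. f (s1 c x) = s2 c (f x))"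

definition bilin :: "('k::field \<Rightarrow> 'a::ab_group_add \<Rightarrow> 'a) \<Rightarrow> ('k \<Rightarrow> 'b::ab_group_add \<Rightarrow> 'b)
    \<Rightarrow> ('k \<Rightarrow> 'c::ab_group_add \<Rightarrow> 'c) \<Rightarrow> ('a \<Rightarrow> 'b \<Rightarrow> 'c) \<Rightarrow> bool" where
  "bilin s1 s2 s3 f \<longleftrightarrow> (\<forall>x. lin s2 s3 (f x)) \<and> (\<forall>y. lin s1 s3 (\<lambda>x. f x y))"

definition trilin :: "('k::field \<Rightarrow> 'h::ab_group_add \<Rightarrow> 'h) \<Rightarrow> ('h \<Rightarrow> 'h \<Rightarrow> 'h \<Rightarrow> 'k) \<Rightarrow> bool" where
  "trilin sc f \<longleftrightarrow> (\<forall>y z. lin sc (*) (\<lambda>x. f x y z)) \<and> (\<forall>x z. lin sc (*) (\<lambda>y. f x y z))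
     \<and> (\<forall>x y. lin sc (*) (\<lambda>z. f x y z))"

definition teq2 :: "('k::field \<Rightarrow> 'h::ab_group_add \<Rightarrow> 'h) \<Rightarrow> ('h \<times> 'h) list \<Rightarrow> ('h \<times> 'h) list \<Rightarrow> bool" where
  "teq2 sc s t \<longleftrightarrow> (\<forall>f :: 'h \<Rightarrow> 'h \<Rightarrow> 'k. bilin sc sc (*) f \<longrightarrow>
      sum_list (map (\<lambda>(a, b). f a b) s) = sum_list (map (\<lambda>(a, b). f a b) t))"

definition teq3 :: "('k::field \<Rightarrow> 'h::ab_group_add \<Rightarrow> 'h) \<Rightarrow> ('h \<times> 'h \<times> 'h) list \<Rightarrow> ('h \<times> 'h \<times> 'h) list \<Rightarrow> bool" where
  "teq3 sc s t \<longleftrightarrow> (\<forall>f :: 'h \<Rightarrow> 'h \<Rightarrow> 'h \<Rightarrow> 'k. trilin sc f \<longrightarrow>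
      sum_list (map (\<lambda>(a, b, c). f a b c) s) = sum_list (map (\<lambda>(a, b, c). f a b c) t))"

definition tlin2 :: "('k::field \<Rightarrow> 'h::ab_group_add \<Rightarrow> 'h) \<Rightarrow> ('h \<Rightarrow> ('h \<times> 'h) list) \<Rightarrow> bool" where
  "tlin2 sc F \<longleftrightarrow> (\<forall>x y. teq2 sc (F (x + y)) (F x @ F y))
     \<and> (\<forall>c x. teq2 sc (F (sc c x)) (map (\<lambda>(a, b). (sc c a, b)) (F x)))"

definition cop3 :: "('h \<Rightarrow> ('h \<times> 'h) list) \<Rightarrow> 'h \<Rightarrow> ('h \<times> 'h \<times> 'h) list" where
  "cop3 cop x = [(a1, a2, b). (a, b) \<leftarrow> cop x, (a1, a2) \<leftarrow> cop a]"

definition cop4 :: "('h \<Rightarrow> ('h \<times> 'h) list) \<Rightarrow> 'h \<Rightarrow> ('h \<times> 'h \<times> 'h \<times> 'h) list" where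
  "cop4 cop x = [(a1, a2, b, c). (a, b, c) \<leftarrow> cop3 cop x, (a1, a2) \<leftarrow> cop a]"

definition is_algebra :: "('k::field \<Rightarrow> 'h::ab_group_add \<Rightarrow> 'h) \<Rightarrow> ('h \<Rightarrow> 'h \<Rightarrow> 'h) \<Rightarrow> 'h \<Rightarrow> bool" where
  "is_algebra sc mul u \<longleftrightarrow> Vector_Spaces.vector_space sc \<and> bilin sc sc sc mul
     \<and> (\<forall>x y z. mul (mul x y) z = mul x (mul y z)) \<and> (\<forall>x. mul u x = x \<and> mul x u = x)"

definition is_coalgebra :: "('k::field \<Rightarrow> 'h::ab_group_add \<Rightarrow> 'h) \<Rightarrow> ('h \<Rightarrow> ('h \<times> 'h) list)
    \<Rightarrow> ('h \<Rightarrow> 'k) \<Rightarrow> bool" where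
  "is_coalgebra sc cop eps \<longleftrightarrow> Vector_Spaces.vector_space sc \<and> tlin2 sc cop \<and> lin sc (*) eps
     \<and> (\<forall>x. teq3 sc (cop3 cop x) [(a, b1, b2). (a, b) \<leftarrow> cop x, (b1, b2) \<leftarrow> cop b])
     \<and> (\<forall>x. sum_list (map (\<lambda>(a, b). sc (eps a) b) (cop x)) = x)
     \<and> (\<forall>x. sum_list (map (\<lambda>(a, b). sc (eps b) a) (cop x)) = x)"

definition swsum :: "('h \<Rightarrow> ('h \<times> 'h) list) \<Rightarrow> ('h \<Rightarrow> 'h \<Rightarrow> 'v::ab_group_add) \<Rightarrow> 'h \<Rightarrow> 'v" where
  "swsum cop f x = sum_list (map (\<lambda>(a, b). f a b) (cop x))"

definition bul :: "('h \<Rightarrow> 'h \<Rightarrow> 'h) \<Rightarrow> ('h \<Rightarrow> ('h \<times> 'h) list) \<Rightarrow> ('h \<Rightarrow> 'h \<Rightarrow> 'h)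
    \<Rightarrow> 'h \<Rightarrow> 'h \<Rightarrow> 'h::ab_group_add" where
  "bul mul cop hit x y = swsum cop (\<lambda>a b. mul a (hit b y)) x"

definition Sh :: "('h \<Rightarrow> ('h \<times> 'h) list) \<Rightarrow> ('h \<Rightarrow> 'h) \<Rightarrow> ('h \<Rightarrow> 'h \<Rightarrow> 'h) \<Rightarrow> 'h \<Rightarrow> 'h::ab_group_add" where
  "Sh cop S \<beta> x = swsum cop (\<lambda>a b. \<beta> a (S b)) x"

definition lhit :: "('h \<Rightarrow> 'h \<Rightarrow> 'h) \<Rightarrow> ('h \<Rightarrow> ('h \<times> 'h) list) \<Rightarrow> ('h \<Rightarrow> 'h) \<Rightarrow> ('h \<Rightarrow> 'h \<Rightarrow> 'h)
    \<Rightarrow> ('h \<Rightarrow> 'h \<Rightarrow> 'h) \<Rightarrow> 'h \<Rightarrow> 'h \<Rightarrow> 'h::ab_group_add" where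
  "lhit mul cop S hit \<beta> x y = swsum cop (\<lambda>x1 x2. swsum cop (\<lambda>y1 y2.
      bul mul cop hit (bul mul cop hit (Sh cop S \<beta> (hit x1 y1)) x2) y2) y) x"

text \<open>Yetter--Drinfeld post-Hopf algebra; \<beta> is the (unique) convolution inverse of \<alpha>.\<close>
definition yd_post_hopf :: "('k::field \<Rightarrow> 'h::ab_group_add \<Rightarrow> 'h) \<Rightarrow> ('h \<Rightarrow> 'h \<Rightarrow> 'h) \<Rightarrow> 'h
    \<Rightarrow> ('h \<Rightarrow> ('h \<times> 'h) list) \<Rightarrow> ('h \<Rightarrow> 'k) \<Rightarrow> ('h \<Rightarrow> 'h) \<Rightarrow> ('h \<Rightarrow> 'h \<Rightarrow> 'h)
    \<Rightarrow> ('h \<Rightarrow> 'h \<Rightarrow> 'h) \<Rightarrow> bool" where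
  "yd_post_hopf sc mul u cop eps S hit \<beta> \<longleftrightarrow>
     is_algebra sc mul u \<and> is_coalgebra sc cop eps \<and> lin sc sc S
     \<and> (\<forall>x. swsum cop (\<lambda>a b. mul a (S b)) x = sc (eps x) u)
     \<and> (\<forall>x. swsum cop (\<lambda>a b. mul (S a) b) x = sc (eps x) u)
     \<comment> \<open>\<rightharpoonup> is a coalgebra morphism H (x) H -> H\<close>
     \<and> bilin sc sc sc hit
     \<and> (\<forall>x y. teq2 sc (cop (hit x y)) [(hit x1 y1, hit x2 y2). (x1, x2) \<leftarrow> cop x, (y1, y2) \<leftarrow> cop y])
     \<and> (\<forall>x y. eps (hit x y) = eps x * eps y)
     \<comment> \<open>(P1)\<close>
     \<and> (\<forall>x y z. hit x (mul y z) = swsum cop (\<lambda>x1 x2. mul (hit x1 y) (hit x2 z)) x)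
     \<comment> \<open>(P2)\<close>
     \<and> (\<forall>x y z. hit x (hit y z) = hit (bul mul cop hit x y) z)
     \<comment> \<open>(P3): \<beta> : H -> End(H) linear, two-sided convolution inverse of \<alpha>\<close>
     \<and> bilin sc sc sc \<beta>
     \<and> (\<forall>x y. swsum cop (\<lambda>a b. hit a (\<beta> b y)) x = sc (eps x) y)
     \<and> (\<forall>x y. swsum cop (\<lambda>a b. \<beta> a (hit b y)) x = sc (eps x) y)
     \<comment> \<open>(P4)\<close>
     \<and> (\<forall>a b. eps (mul a b) = eps a * eps b) \<and> eps u = 1 \<and> teq2 sc (cop u) [(u, u)]
     \<comment> \<open>(P5)\<close>
     \<and> (\<forall>x y. teq2 sc (cop (mul x y))
          [(mul x1 (hit x2 (\<beta> x4 y1)), mul x3 y2). (x1, x2, x3, x4) \<leftarrow> cop4 cop x, (y1, y2) \<leftarrow> cop y])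
     \<comment> \<open>(P6)\<close>
     \<and> (\<forall>x. teq2 sc (cop (Sh cop S \<beta> x)) [(Sh cop S \<beta> b, Sh cop S \<beta> a). (a, b) \<leftarrow> cop x])
     \<and> (\<forall>x y. teq2 sc
          [(hit x1 y1, lhit mul cop S hit \<beta> x2 y2). (x1, x2) \<leftarrow> cop x, (y1, y2) \<leftarrow> cop y]
          [(hit x2 y2, lhit mul cop S hit \<beta> x1 y1). (x1, x2) \<leftarrow> cop x, (y1, y2) \<leftarrow> cop y])"

definition ll_yd_module :: "('k::field \<Rightarrow> 'h::ab_group_add \<Rightarrow> 'h) \<Rightarrow> ('h \<Rightarrow> 'h \<Rightarrow> 'h) \<Rightarrow> 'h
    \<Rightarrow> ('h \<Rightarrow> ('h \<times> 'h) list) \<Rightarrow> ('h \<Rightarrow> 'k) \<Rightarrow> ('h \<Rightarrow> 'h) \<Rightarrow> ('h \<Rightarrow> 'h \<Rightarrow> 'h)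
    \<Rightarrow> ('h \<Rightarrow> ('h \<times> 'h) list) \<Rightarrow> bool" where
  "ll_yd_module sc amul au acop aeps aT act coact \<longleftrightarrow>
     \<comment> \<open>left A-module\<close>
     bilin sc sc sc act
     \<and> (\<forall>a b v. act (amul a b) v = act a (act b v)) \<and> (\<forall>v. act au v = v)
     \<comment> \<open>left A-comodule\<close>
     \<and> tlin2 sc coact
     \<and> (\<forall>v. teq3 sc [(m1, m2, v0). (m, v0) \<leftarrow> coact v, (m1, m2) \<leftarrow> acop m]
                    [(m, n, w). (m, v0) \<leftarrow> coact v, (n, w) \<leftarrow> coact v0])
     \<and> (\<forall>v. sum_list (map (\<lambda>(m, v0). sc (aeps m) v0) (coact v)) = v)
     \<comment> \<open>Yetter--Drinfeld compatibility\<close>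
     \<and> (\<forall>a v. teq2 sc (coact (act a v))
          [(amul (amul a1 m) (aT a3), act a2 v0). (a1, a2, a3) \<leftarrow> cop3 acop a, (m, v0) \<leftarrow> coact v])"

text \<open>Hopf monoid in the braided category of left-left YD modules over A (data as above),
  with underlying YD module (H, act, coact); braiding sigma(v (x) w) = v_{-1} act w (x) v_0;
  diagonal action/coaction on tensor products; trivial structures on the unit object.\<close>
definition hopf_monoid_in_yd :: "('k::field \<Rightarrow> 'h::ab_group_add \<Rightarrow> 'h) \<Rightarrow> ('h \<Rightarrow> 'h \<Rightarrow> 'h) \<Rightarrow> 'h
    \<Rightarrow> ('h \<Rightarrow> ('h \<times> 'h) list) \<Rightarrow> ('h \<Rightarrow> 'k) \<Rightarrow> ('h \<Rightarrow> 'h \<Rightarrow> 'h) \<Rightarrow> ('h \<Rightarrow> ('h \<times> 'h) list)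
    \<Rightarrow> ('h \<Rightarrow> 'h \<Rightarrow> 'h) \<Rightarrow> 'h \<Rightarrow> ('h \<Rightarrow> ('h \<times> 'h) list) \<Rightarrow> ('h \<Rightarrow> 'k) \<Rightarrow> ('h \<Rightarrow> 'h) \<Rightarrow> bool" where
  "hopf_monoid_in_yd sc amul au acop aeps act coact mul u cop eps S \<longleftrightarrow>
     is_algebra sc mul u \<and> is_coalgebra sc cop eps
     \<comment> \<open>structure maps are module morphisms\<close>
     \<and> (\<forall>a x y. act a (mul x y) = swsum acop (\<lambda>a1 a2. mul (act a1 x) (act a2 y)) a)
     \<and> (\<forall>a. act a u = sc (aeps a) u)
     \<and> (\<forall>a x. teq2 sc (cop (act a x)) [(act a1 x1, act a2 x2). (a1, a2) \<leftarrow> acop a, (x1, x2) \<leftarrow> cop x])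
     \<and> (\<forall>a x. eps (act a x) = aeps a * eps x)
     \<comment> \<open>structure maps are comodule morphisms\<close>
     \<and> (\<forall>x y. teq2 sc (coact (mul x y)) [(amul m n, mul x0 y0). (m, x0) \<leftarrow> coact x, (n, y0) \<leftarrow> coact y])
     \<and> teq2 sc (coact u) [(au, u)]
     \<and> (\<forall>x. teq3 sc [(m, c1, c2). (m, c) \<leftarrow> coact x, (c1, c2) \<leftarrow> cop c]
                    [(amul m n, a0, b0). (a, b) \<leftarrow> cop x, (m, a0) \<leftarrow> coact a, (n, b0) \<leftarrow> coact b])
     \<and> (\<forall>x. sum_list (map (\<lambda>(m, c). sc (eps c) m) (coact x)) = sc (eps x) au)
     \<comment> \<open>compatibility of unit and counit\<close>
     \<and> (\<forall>a b. eps (mul a b) = eps a * eps b) \<and> eps u = 1 \<and> teq2 sc (cop u) [(u, u)]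
     \<comment> \<open>braided bimonoid axiom: Delta o m = (m (x) m)(Id (x) sigma (x) Id)(Delta (x) Delta)\<close>
     \<and> (\<forall>x y. teq2 sc (cop (mul x y))
          [(mul x1 (act m y1), mul x20 y2). (x1, x2) \<leftarrow> cop x, (m, x20) \<leftarrow> coact x2, (y1, y2) \<leftarrow> cop y])
     \<comment> \<open>antipode: a morphism in the category which is a convolution inverse of Id\<close>
     \<and> lin sc sc S
     \<and> (\<forall>a x. S (act a x) = act a (S x))
     \<and> (\<forall>x. teq2 sc (coact (S x)) [(m, S c). (m, c) \<leftarrow> coact x])
     \<and> (\<forall>x. swsum cop (\<lambda>a b. mul a (S b)) x = sc (eps x) u)
     \<and> (\<forall>x. swsum cop (\<lambda>a b. mul (S a) b) x = sc (eps x) u)"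

definition adL :: "('h \<Rightarrow> 'h \<Rightarrow> 'h) \<Rightarrow> ('h \<Rightarrow> ('h \<times> 'h) list) \<Rightarrow> ('h \<Rightarrow> 'h) \<Rightarrow> ('h \<Rightarrow> 'h \<Rightarrow> 'h)
    \<Rightarrow> ('h \<Rightarrow> 'h \<Rightarrow> 'h) \<Rightarrow> 'h \<Rightarrow> ('h \<times> 'h::ab_group_add) list" where
  "adL mul cop S hit \<beta> x =
     [(bul mul cop hit a1 (Sh cop S \<beta> a3), a2). (a1, a2, a3) \<leftarrow> cop3 cop x]"

end

theory Submission
  imports Defs
begin

text \<open>All computations take place in the subadjacent Hopf algebra \<open>H\<^sub>\<rightharpoonup>\<close>.  Once \<open>\<bullet>\<close> is
  known to be associative with antipode \<open>S\<^sub>\<rightharpoonup>\<close>, both \<open>\<beta>\<close> and \<open>\<alpha> \<circ> S\<^sub>\<rightharpoonup>\<close> are convolution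
  inverses of \<open>\<alpha>\<close>, hence \<open>S\<^sub>\<rightharpoonup>(x) \<rightharpoonup> y = \<beta>(x)(y)\<close>; moreover \<open>S\<^sub>\<rightharpoonup>\<close> is anti-multiplicative and
  \<open>x \<bullet> y = (x\<^sub>1 \<rightharpoonup> y\<^sub>1) \<bullet> (x\<^sub>2 \<leftharpoonup> y\<^sub>2)\<close>.  Together with (P6), which makes \<open>\<leftharpoonup>\<close> a
  coalgebra map as well, these identities reduce every Yetter--Drinfeld and Hopf-monoid axiom to a
  Sweedler-notation computation.\<close>

section \<open>Linear maps and represented tensors\<close>

lemma lin_zero: "lin s1 s2 f \<Longrightarrow> f 0 = 0"
  unfolding lin_def by (metis add_cancel_right_right add_0)

lemma lin_diff: "lin s1 s2 f \<Longrightarrow> f (a - b) = f a - f b"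
  unfolding lin_def by (metis add_diff_cancel diff_add_cancel)

lemma lin_scale: "lin s1 s2 f \<Longrightarrow> f (s1 c v) = s2 c (f v)"
  unfolding lin_def by blast

lemma lin_sum_list: "lin s1 s2 f \<Longrightarrow> f (sum_list (map g xs)) = sum_list (map (\<lambda>x. f (g x)) xs)"
  by (induction xs) (auto simp: lin_zero, simp add: lin_def)

lemma lin_id: "lin s s (\<lambda>z. z)"
  unfolding lin_def by simp

lemma lin_comp: "lin s1 s2 g \<Longrightarrow> lin s2 s3 h \<Longrightarrow> lin s1 s3 (\<lambda>z. h (g z))"
  unfolding lin_def by simp

lemma lin_scalar: "Vector_Spaces.vector_space s \<Longrightarrow> lin s s (s c)"
  unfolding lin_def vector_space_def by (metis mult.commute)

lemma lin_sum_list_param: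
  assumes vs: "Vector_Spaces.vector_space s2" and l: "\<And>p. lin s1 s2 (\<lambda>z. G z p)"
  shows "lin s1 s2 (\<lambda>z. sum_list (map (G z) xs))"
proof -
  interpret V: vector_space s2 by fact
  show ?thesis
  proof (induction xs)
    case Nil then show ?case by (simp add: lin_def V.scale_zero_right)
  next
    case (Cons p xs)
    then show ?case using l[of p] unfolding lin_def by (simp add: algebra_simps V.scale_right_distrib)
  qed
qed

lemma bilin_lin_left: "bilin s1 s2 s3 f \<Longrightarrow> lin s0 s1 g \<Longrightarrow> lin s0 s3 (\<lambda>z. f (g z) c)"
  unfolding bilin_def by (rule lin_comp[of _ _ g]) auto

lemma bilin_lin_right: "bilin s1 s2 s3 f \<Longrightarrow> lin s0 s2 g \<Longrightarrow> lin s0 s3 (\<lambda>z. f c (g z))"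
  unfolding bilin_def by (rule lin_comp[of _ _ g]) auto

lemma trilin_lin_1: "trilin s f \<Longrightarrow> lin s s g \<Longrightarrow> lin s (*) (\<lambda>z. f (g z) b c)"
  unfolding trilin_def by (rule lin_comp[of _ _ g]) auto

lemma trilin_lin_2: "trilin s f \<Longrightarrow> lin s s g \<Longrightarrow> lin s (*) (\<lambda>z. f a (g z) c)"
  unfolding trilin_def by (rule lin_comp[of _ _ g]) auto

lemma trilin_lin_3: "trilin s f \<Longrightarrow> lin s s g \<Longrightarrow> lin s (*) (\<lambda>z. f a b (g z))"
  unfolding trilin_def by (rule lin_comp[of _ _ g]) auto

lemma vector_space_field: "Vector_Spaces.vector_space ((*) :: 'k::field \<Rightarrow> 'k \<Rightarrow> 'k)"
  by unfold_locales (auto simp: algebra_simps)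

lemma vector_space_functional_nonzero:
  assumes vs: "Vector_Spaces.vector_space (s :: 'k::field \<Rightarrow> 'v::ab_group_add \<Rightarrow> 'v)" and "v \<noteq> 0"
  obtains \<phi> where "lin s (*) \<phi>" "\<phi> v \<noteq> 0"
proof -
  interpret V: vector_space s by fact
  obtain B where B: "V.independent B" "V.span B = UNIV"
    using V.basis_exists[of UNIV] by (metis top.extremum_uniqueI)
  have lin_coord: "lin s (*) (\<lambda>v. V.representation B v b)" for b
    using V.linear_representation[OF B] unfolding Vector_Spaces.linear_iff lin_def by auto
  have "\<exists>b. V.representation B v b \<noteq> 0"
  proof (rule ccontr)
    assume "\<nexists>b. V.representation B v b \<noteq> 0"
    then have "v = (\<Sum>b | V.representation B v b \<noteq> 0. s (V.representation B v b) b)"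
      using V.sum_nonzero_representation_eq[OF B(1), of v] B(2) by auto
    also have "\<dots> = 0" using \<open>\<nexists>b. V.representation B v b \<noteq> 0\<close> by simp
    finally show False using \<open>v \<noteq> 0\<close> by simp
  qed
  then show ?thesis using that lin_coord by blast
qed

lemma eq_if_functionals_agree:
  assumes "Vector_Spaces.vector_space s" and "\<And>\<phi>. lin s (*) \<phi> \<Longrightarrow> \<phi> a = \<phi> b"
  shows "a = b"
proof (rule ccontr)
  assume "a \<noteq> b"
  then obtain \<phi> where "lin s (*) \<phi>" "\<phi> (a - b) \<noteq> 0"
    using vector_space_functional_nonzero[OF assms(1)] by (metis right_minus_eq)
  then show False using assms(2)[of \<phi>] lin_diff[of s "(*)" \<phi> a b] by simp
qed

text \<open>Tensor equality is defined by testing against scalar-valued bilinear forms; since linear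
  functionals separate points, it may be tested against bilinear maps into any vector space.\<close>

lemma teq2_sum_eq:
  assumes t: "teq2 sc xs ys" and s: "Vector_Spaces.vector_space s"
    and f1: "\<And>b. lin sc s (\<lambda>a. f a b)" and f2: "\<And>a. lin sc s (\<lambda>b. f a b)"
  shows "sum_list (map (\<lambda>(a, b). f a b) xs) = sum_list (map (\<lambda>(a, b). f a b) ys)"
proof (rule eq_if_functionals_agree[OF s])
  fix \<phi> assume \<phi>: "lin s (*) \<phi>"
  have "bilin sc sc (*) (\<lambda>a b. \<phi> (f a b))"
    unfolding bilin_def using lin_comp[OF f1 \<phi>] lin_comp[OF f2 \<phi>] by blast
  then have "sum_list (map (\<lambda>(a, b). \<phi> (f a b)) xs) = sum_list (map (\<lambda>(a, b). \<phi> (f a b)) ys)"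
    using t unfolding teq2_def by blast
  then show "\<phi> (sum_list (map (\<lambda>(a, b). f a b) xs)) = \<phi> (sum_list (map (\<lambda>(a, b). f a b) ys))"
    by (simp add: lin_sum_list[OF \<phi>] split_def)
qed

lemma teq3_sum_eq:
  assumes t: "teq3 sc xs ys" and s: "Vector_Spaces.vector_space s"
    and f1: "\<And>b c. lin sc s (\<lambda>a. f a b c)" and f2: "\<And>a c. lin sc s (\<lambda>b. f a b c)"
    and f3: "\<And>a b. lin sc s (\<lambda>c. f a b c)"
  shows "sum_list (map (\<lambda>(a, b, c). f a b c) xs) = sum_list (map (\<lambda>(a, b, c). f a b c) ys)"
proof (rule eq_if_functionals_agree[OF s])
  fix \<phi> assume \<phi>: "lin s (*) \<phi>"
  have "trilin sc (\<lambda>a b c. \<phi> (f a b c))"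
    unfolding trilin_def using lin_comp[OF f1 \<phi>] lin_comp[OF f2 \<phi>] lin_comp[OF f3 \<phi>] by blast
  then have "sum_list (map (\<lambda>(a, b, c). \<phi> (f a b c)) xs) = sum_list (map (\<lambda>(a, b, c). \<phi> (f a b c)) ys)"
    using t unfolding teq3_def by blast
  then show "\<phi> (sum_list (map (\<lambda>(a, b, c). f a b c) xs)) = \<phi> (sum_list (map (\<lambda>(a, b, c). f a b c) ys))"
    by (simp add: lin_sum_list[OF \<phi>] split_def)
qed

text \<open>Writing sums over the second tensor factor with
  \<open>swsum2\<close> gives the simplifier a fixed nesting order (sums over the first factor outside),
  so that interchanging Sweedler sums does not loop.\<close>
definition swsum2 :: "('h \<Rightarrow> ('h \<times> 'h) list) \<Rightarrow> ('h \<Rightarrow> 'h \<Rightarrow> 'v::ab_group_add) \<Rightarrow> 'h \<Rightarrow> 'v" where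
  "swsum2 = swsum"

lemma sum_list_map_concat: "sum_list (map f (concat xss)) = sum_list (map (\<lambda>xs. sum_list (map f xs)) xss)"
  by (induction xss) auto

lemma sum_list_map_swap:
  fixes f :: "'a \<Rightarrow> 'b \<Rightarrow> 'c::comm_monoid_add"
  shows "sum_list (map (\<lambda>a. sum_list (map (f a) ys)) xs) = sum_list (map (\<lambda>b. sum_list (map (\<lambda>a. f a b) xs)) ys)"
proof (induction xs)
  case Nil then show ?case by (induction ys) auto
next
  case (Cons x xs)
  have "sum_list (map (\<lambda>b. f x b + sum_list (map (\<lambda>a. f a b) xs)) ys)
      = sum_list (map (f x) ys) + sum_list (map (\<lambda>b. sum_list (map (\<lambda>a. f a b) xs)) ys)"
    by (induction ys) (auto simp: add_ac)
  with Cons show ?case by simp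
qed

lemma swsum_fubini:
  "swsum cop (\<lambda>a b. swsum2 cop' (\<lambda>c d. F a b c d) y) x = swsum2 cop' (\<lambda>c d. swsum cop (\<lambda>a b. F a b c d) x) y"
  unfolding swsum2_def swsum_def
  using sum_list_map_swap[of "\<lambda>p q. (case p of (a,b) \<Rightarrow> case q of (c,d) \<Rightarrow> F a b c d)" "cop' y" "cop x"]
  by (simp add: split_def)

lemma lin_swsum: "lin s1 s2 g \<Longrightarrow> g (swsum cop F x) = swsum cop (\<lambda>a b. g (F a b)) x"
  unfolding swsum_def by (simp add: lin_sum_list split_def)

lemma lin_swsum2: "lin s1 s2 g \<Longrightarrow> g (swsum2 cop F x) = swsum2 cop (\<lambda>a b. g (F a b)) x"
  unfolding swsum2_def by (rule lin_swsum)

lemma lin_swsum_fun: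
  "Vector_Spaces.vector_space s2 \<Longrightarrow> (\<And>a b. lin s1 s2 (\<lambda>z. F z a b)) \<Longrightarrow> lin s1 s2 (\<lambda>z. swsum cop (F z) c)"
  unfolding swsum_def by (rule lin_sum_list_param) (auto simp: case_prod_beta)

lemma lin_swsum2_fun:
  "Vector_Spaces.vector_space s2 \<Longrightarrow> (\<And>a b. lin s1 s2 (\<lambda>z. F z a b)) \<Longrightarrow> lin s1 s2 (\<lambda>z. swsum2 cop (F z) c)"
  unfolding swsum2_def by (rule lin_swsum_fun)

lemma lin_swsum_arg:
  assumes cop: "tlin2 sc cop" and s: "Vector_Spaces.vector_space s"
    and f1: "\<And>b. lin sc s (\<lambda>a. F a b)" and f2: "\<And>a. lin sc s (\<lambda>b. F a b)"
  shows "lin sc s (\<lambda>z. swsum cop F z)"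
proof -
  have "swsum cop F (x + y) = swsum cop F x + swsum cop F y" for x y
    using teq2_sum_eq[OF conjunct1[OF cop[unfolded tlin2_def], rule_format, of x y] s f1 f2]
    by (simp add: swsum_def)
  moreover have "swsum cop F (sc c x) = s c (swsum cop F x)" for c x
  proof -
    have "swsum cop F (sc c x) = sum_list (map (\<lambda>(a, b). F a b) (map (\<lambda>(a, b). (sc c a, b)) (cop x)))"
      using teq2_sum_eq[OF conjunct2[OF cop[unfolded tlin2_def], rule_format, of c x] s f1 f2]
      by (simp add: swsum_def)
    also have "\<dots> = sum_list (map (\<lambda>(a, b). s c (F a b)) (cop x))"
      using f1 unfolding lin_def by (simp add: split_def o_def)
    also have "\<dots> = s c (swsum cop F x)"
      unfolding swsum_def by (simp add: lin_sum_list[OF lin_scalar[OF s]] split_def)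
    finally show ?thesis .
  qed
  ultimately show ?thesis unfolding lin_def by blast
qed

lemma lin_swsum2_arg:
  "tlin2 sc cop \<Longrightarrow> Vector_Spaces.vector_space s \<Longrightarrow> (\<And>b. lin sc s (\<lambda>a. F a b)) \<Longrightarrow>
    (\<And>a. lin sc s (\<lambda>b. F a b)) \<Longrightarrow> lin sc s (\<lambda>z. swsum2 cop F z)"
  unfolding swsum2_def by (rule lin_swsum_arg)

lemma sum_cop3: "sum_list (map (\<lambda>(a, b, c). f a b c) (cop3 cop x)) = swsum cop (\<lambda>p c. swsum cop (\<lambda>a b. f a b c) p) x"
  unfolding cop3_def swsum_def by (simp add: sum_list_map_concat split_def o_def)

lemmas bilin_simps = bilin_lin_left bilin_lin_right
  lin_swsum[OF bilin_lin_left[OF _ lin_id]] lin_swsum[OF bilin_lin_right[OF _ lin_id]]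
  lin_swsum2[OF bilin_lin_left[OF _ lin_id]] lin_swsum2[OF bilin_lin_right[OF _ lin_id]]
  lin_scale[OF bilin_lin_left[OF _ lin_id]] lin_scale[OF bilin_lin_right[OF _ lin_id]]

lemmas trilin_simps = trilin_lin_1 trilin_lin_2 trilin_lin_3
  lin_swsum[OF trilin_lin_1[OF _ lin_id]] lin_swsum[OF trilin_lin_2[OF _ lin_id]]
  lin_swsum[OF trilin_lin_3[OF _ lin_id]]
  lin_scale[OF trilin_lin_1[OF _ lin_id]] lin_scale[OF trilin_lin_2[OF _ lin_id]]
  lin_scale[OF trilin_lin_3[OF _ lin_id]]

section \<open>Sweedler calculus in a Yetter--Drinfeld post-Hopf algebra\<close>

locale yd_post_hopf_algebra =
  fixes sc :: "'k::field \<Rightarrow> 'h::ab_group_add \<Rightarrow> 'h"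
    and mul :: "'h \<Rightarrow> 'h \<Rightarrow> 'h" and u :: 'h
    and cop :: "'h \<Rightarrow> ('h \<times> 'h) list" and eps :: "'h \<Rightarrow> 'k"
    and S :: "'h \<Rightarrow> 'h" and hit :: "'h \<Rightarrow> 'h \<Rightarrow> 'h" and \<beta> :: "'h \<Rightarrow> 'h \<Rightarrow> 'h"
  assumes yd_post_hopf: "yd_post_hopf sc mul u cop eps S hit \<beta>"
begin

abbreviation D where "D \<equiv> swsum cop"
abbreviation E where "E \<equiv> swsum2 cop"
abbreviation bu where "bu \<equiv> bul mul cop hit"
abbreviation T where "T \<equiv> Sh cop S \<beta>"
abbreviation lh where "lh \<equiv> lhit mul cop S hit \<beta>"
abbreviation ad where "ad \<equiv> adL mul cop S hit \<beta>"

lemma algebra: "is_algebra sc mul u"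
  and coalgebra: "is_coalgebra sc cop eps"
  and lin_S: "lin sc sc S"
  and antipode_right: "D (\<lambda>a b. mul a (S b)) x = sc (eps x) u"
  and antipode_left: "D (\<lambda>a b. mul (S a) b) x = sc (eps x) u"
  and bil_hit: "bilin sc sc sc hit"
  and cop_hit: "teq2 sc (cop (hit x y)) [(hit x1 y1, hit x2 y2). (x1, x2) \<leftarrow> cop x, (y1, y2) \<leftarrow> cop y]"
  and eps_hit: "eps (hit x y) = eps x * eps y"
  and hit_mul: "hit x (mul y z) = D (\<lambda>x1 x2. mul (hit x1 y) (hit x2 z)) x"
  and hit_hit: "hit x (hit y z) = hit (bu x y) z"
  and bil_beta: "bilin sc sc sc \<beta>"
  and hit_beta: "D (\<lambda>a b. hit a (\<beta> b y)) x = sc (eps x) y"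
  and beta_hit: "D (\<lambda>a b. \<beta> a (hit b y)) x = sc (eps x) y"
  and eps_mul: "eps (mul a b) = eps a * eps b"
  and eps_unit [simp]: "eps u = 1"
  and cop_unit: "teq2 sc (cop u) [(u, u)]"
  and cop_mul: "teq2 sc (cop (mul x y))
          [(mul x1 (hit x2 (\<beta> x4 y1)), mul x3 y2). (x1, x2, x3, x4) \<leftarrow> cop4 cop x, (y1, y2) \<leftarrow> cop y]"
  and cop_Sh: "teq2 sc (cop (T x)) [(T b, T a). (a, b) \<leftarrow> cop x]"
  and cop_hit_lhit_swap: "teq2 sc
          [(hit x1 y1, lh x2 y2). (x1, x2) \<leftarrow> cop x, (y1, y2) \<leftarrow> cop y]
          [(hit x2 y2, lh x1 y1). (x1, x2) \<leftarrow> cop x, (y1, y2) \<leftarrow> cop y]"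
  using yd_post_hopf unfolding yd_post_hopf_def by fast+

lemma vs: "Vector_Spaces.vector_space sc"
  and bil_mul: "bilin sc sc sc mul"
  and mul_assoc: "mul (mul x y) z = mul x (mul y z)"
  and mul_unit [simp]: "mul u x = x" "mul x u = x"
  using algebra unfolding is_algebra_def by blast+

lemma tlin_cop: "tlin2 sc cop"
  and lin_eps: "lin sc (*) eps"
  and coassoc: "teq3 sc (cop3 cop x) [(a, b1, b2). (a, b) \<leftarrow> cop x, (b1, b2) \<leftarrow> cop b]"
  and counit_left: "sum_list (map (\<lambda>(a, b). sc (eps a) b) (cop x)) = x"
  and counit_right: "sum_list (map (\<lambda>(a, b). sc (eps b) a) (cop x)) = x"
  using coalgebra unfolding is_coalgebra_def by blast+

lemma sc_mult: "sc (a * b) v = sc a (sc b v)"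
  using vs unfolding vector_space_def by simp

lemma sc_one [simp]: "sc 1 v = v"
  using vs unfolding vector_space_def by simp

lemma swsum_eq_swsum2: "swsum cop = swsum2 cop"
  by (simp add: swsum2_def)

lemma swsum_cong: "(\<And>a b. F a b = G a b) \<Longrightarrow> D F x = D G x"
  by (simp add: swsum_def split_def)

lemma swsum_coassoc:
  assumes s: "Vector_Spaces.vector_space s"
    and f1: "\<And>b c. lin sc s (\<lambda>a. F a b c)" and f2: "\<And>a c. lin sc s (\<lambda>b. F a b c)"
    and f3: "\<And>a b. lin sc s (\<lambda>c. F a b c)"
  shows "D (\<lambda>a b. D (\<lambda>c d. F c d b) a) x = D (\<lambda>a b. D (\<lambda>c d. F a c d) b) x"
  using teq3_sum_eq[OF coassoc s f1 f2 f3] unfolding sum_cop3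
  by (simp add: swsum_def sum_list_map_concat split_def o_def)

lemma swsum2_coassoc:
  "Vector_Spaces.vector_space s \<Longrightarrow> (\<And>b c. lin sc s (\<lambda>a. F a b c)) \<Longrightarrow> (\<And>a c. lin sc s (\<lambda>b. F a b c)) \<Longrightarrow>
    (\<And>a b. lin sc s (\<lambda>c. F a b c)) \<Longrightarrow> E (\<lambda>a b. E (\<lambda>c d. F c d b) a) x = E (\<lambda>a b. E (\<lambda>c d. F a c d) b) x"
  unfolding swsum2_def by (rule swsum_coassoc)

lemma swsum_counit_left:
  assumes g: "lin sc s g" shows "D (\<lambda>a b. s (eps a) (g b)) x = g x"
proof -
  have "g x = g (sum_list (map (\<lambda>(a, b). sc (eps a) b) (cop x)))" by (simp add: counit_left)
  also have "\<dots> = D (\<lambda>a b. s (eps a) (g b)) x"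
    unfolding swsum_def by (simp add: lin_sum_list[OF g] split_def lin_scale[OF g])
  finally show ?thesis by simp
qed

lemma swsum_counit_right:
  assumes g: "lin sc s g" shows "D (\<lambda>a b. s (eps b) (g a)) x = g x"
proof -
  have "g x = g (sum_list (map (\<lambda>(a, b). sc (eps b) a) (cop x)))" by (simp add: counit_right)
  also have "\<dots> = D (\<lambda>a b. s (eps b) (g a)) x"
    unfolding swsum_def by (simp add: lin_sum_list[OF g] split_def lin_scale[OF g])
  finally show ?thesis by simp
qed

lemma swsum_unit:
  "Vector_Spaces.vector_space s \<Longrightarrow> (\<And>b. lin sc s (\<lambda>a. F a b)) \<Longrightarrow> (\<And>a. lin sc s (\<lambda>b. F a b)) \<Longrightarrow> D F u = F u u"
  using teq2_sum_eq[OF cop_unit, of s F] by (simp add: swsum_def)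

lemma bil_bul: "bilin sc sc sc bu"
proof -
  have "lin sc sc (\<lambda>y. bu x y)" for x
    unfolding bul_def
    by (rule lin_swsum_fun[OF vs]) (rule bilin_lin_right[OF bil_mul], rule bilin_lin_right[OF bil_hit], rule lin_id)
  moreover have "lin sc sc (\<lambda>x. bu x y)" for y
    unfolding bul_def
    by (rule lin_swsum_arg[OF tlin_cop vs])
      (auto intro: bilin_lin_left[OF bil_mul lin_id] bilin_lin_right[OF bil_mul bilin_lin_left[OF bil_hit lin_id]])
  ultimately show ?thesis unfolding bilin_def by blast
qed

lemma lin_Sh: "lin sc sc T"
proof -
  have "lin sc sc (\<lambda>x. D (\<lambda>a b. \<beta> a (S b)) x)"
    by (rule lin_swsum_arg[OF tlin_cop vs])
      (rule bilin_lin_left[OF bil_beta] bilin_lin_right[OF bil_beta], rule lin_id lin_S)+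
  then show ?thesis unfolding Sh_def[abs_def] by simp
qed

lemma lin_sc_left: "lin s (*) g \<Longrightarrow> lin s sc (\<lambda>z. sc (g z) v)"
  using vs unfolding lin_def vector_space_def by simp

lemma lin_mult_left: "lin s (*) g \<Longrightarrow> lin s (*) (\<lambda>z. g z * c)"
  and lin_mult_right: "lin s (*) g \<Longrightarrow> lin s (*) (\<lambda>z. c * g z)"
  unfolding lin_def by (simp_all add: algebra_simps)

lemmas lin_partial =
  bilin_lin_left[OF bil_mul lin_id] bilin_lin_right[OF bil_mul lin_id]
  bilin_lin_left[OF bil_hit lin_id] bilin_lin_right[OF bil_hit lin_id]
  bilin_lin_left[OF bil_beta lin_id] bilin_lin_right[OF bil_beta lin_id]
  bilin_lin_left[OF bil_bul lin_id] bilin_lin_right[OF bil_bul lin_id]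
  lin_S lin_Sh lin_eps

lemmas lin_swsum_args =
  lin_swsum_arg[OF tlin_cop vs] lin_swsum_arg[OF tlin_cop vector_space_field]
  lin_swsum2_arg[OF tlin_cop vs] lin_swsum2_arg[OF tlin_cop vector_space_field]

lemmas lin_intros = lin_id
  bilin_lin_left[OF bil_mul] bilin_lin_right[OF bil_mul]
  bilin_lin_left[OF bil_hit] bilin_lin_right[OF bil_hit]
  bilin_lin_left[OF bil_beta] bilin_lin_right[OF bil_beta]
  bilin_lin_left[OF bil_bul] bilin_lin_right[OF bil_bul]
  lin_comp[OF _ lin_S] lin_comp[OF _ lin_Sh] lin_comp[OF _ lin_eps] lin_comp[OF _ lin_scalar[OF vs]]
  lin_sc_left lin_mult_left lin_mult_right
  lin_swsum_fun[OF vs] lin_swsum_fun[OF vector_space_field]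
  lin_swsum2_fun[OF vs] lin_swsum2_fun[OF vector_space_field]
  lin_comp[OF _ lin_swsum_args(1)] lin_comp[OF _ lin_swsum_args(2)]
  lin_comp[OF _ lin_swsum_args(3)] lin_comp[OF _ lin_swsum_args(4)]

lemma lin_sc_const: "lin (*) sc (\<lambda>k. sc k v)"
  using vs unfolding lin_def vector_space_def by simp

lemma lin_mult_const: "lin (*) (*) (\<lambda>k::'k. c * k)"
  unfolding lin_def by (simp add: algebra_simps)

lemma swsum_commute: "D (\<lambda>a b. D (\<lambda>c d. F a b c d) y) x = D (\<lambda>c d. D (\<lambda>a b. F a b c d) x) y"
  using swsum_fubini[where F="\<lambda>a b c d. F a b c d" and cop'=cop and x=x and y=y] by (simp add: swsum2_def)

lemma swsum2_commute: "E (\<lambda>a b. E (\<lambda>c d. F a b c d) y) x = E (\<lambda>c d. E (\<lambda>a b. F a b c d) x) y"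
  using swsum_commute unfolding swsum2_def .

lemma swsum_nested_swap:
  "D (\<lambda>x1 x2. D (\<lambda>a b. D (\<lambda>c d. F c d a b) x1) x2) x = D (\<lambda>x1 x2. D (\<lambda>c d. D (\<lambda>a b. F c d a b) x2) x1) x"
  by (simp only: swsum_commute[of "\<lambda>a b c d. F c d a b"])

lemma swsum2_nested_swap:
  "E (\<lambda>x1 x2. E (\<lambda>a b. E (\<lambda>c d. F c d a b) x1) x2) x = E (\<lambda>x1 x2. E (\<lambda>c d. E (\<lambda>a b. F c d a b) x2) x1) x"
  unfolding swsum2_def by (rule swsum_nested_swap[unfolded swsum2_def])

lemma swsum_commute_snd:
  "D (\<lambda>u1 u2. D (\<lambda>a b. D (\<lambda>c d. F u1 u2 a b c d) y) u2) x = D (\<lambda>u1 u2. D (\<lambda>c d. D (\<lambda>a b. F u1 u2 a b c d) u2) y) x"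
  by (simp only: swsum_commute[of "\<lambda>a b c d. F _ _ a b c d"])

lemma swsum_commute_fst:
  "D (\<lambda>u1 u2. D (\<lambda>a b. D (\<lambda>c d. F u1 u2 a b c d) y) u1) x = D (\<lambda>u1 u2. D (\<lambda>c d. D (\<lambda>a b. F u1 u2 a b c d) u1) y) x"
  by (simp only: swsum_commute[of "\<lambda>a b c d. F _ _ a b c d"])

lemma swsum2_commute_snd:
  "E (\<lambda>u1 u2. E (\<lambda>a b. E (\<lambda>c d. F u1 u2 a b c d) y) u2) x = E (\<lambda>u1 u2. E (\<lambda>c d. E (\<lambda>a b. F u1 u2 a b c d) u2) y) x"
  by (simp only: swsum2_commute[of "\<lambda>a b c d. F _ _ a b c d"])

lemma swsum2_commute_fst:
  "E (\<lambda>u1 u2. E (\<lambda>a b. E (\<lambda>c d. F u1 u2 a b c d) y) u1) x = E (\<lambda>u1 u2. E (\<lambda>c d. E (\<lambda>a b. F u1 u2 a b c d) u1) y) x"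
  by (simp only: swsum2_commute[of "\<lambda>a b c d. F _ _ a b c d"])

lemmas lin_partial_swsum = lin_partial[THEN lin_swsum] lin_swsum[OF lin_sc_const]
lemmas lin_partial_scale = lin_partial[THEN lin_scale]

text \<open>The interchange rules for nested sums are permutative; the simplifier applies them by
  ordered rewriting.\<close>
lemmas sweedler_simps =
  swsum_commute_snd swsum_commute_fst swsum2_commute_snd swsum2_commute_fst
  swsum_nested_swap swsum2_nested_swap lin_intros
  lin_partial_swsum lin_partial[THEN lin_swsum2] lin_swsum2[OF lin_sc_const]
  lin_swsum_args[THEN lin_swsum] lin_swsum_args[THEN lin_swsum2]
  lin_partial_scale lin_swsum_args[THEN lin_scale]
  swsum_coassoc[OF vs] swsum_coassoc[OF vector_space_field]
  swsum2_coassoc[OF vs] swsum2_coassoc[OF vector_space_field]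
  swsum_counit_left[where s=sc] swsum_counit_right[where s=sc]
  swsum_counit_left[where s="(*)"] swsum_counit_right[where s="(*)"]
  swsum_counit_left[where s=sc, unfolded swsum_eq_swsum2]
  swsum_counit_right[where s=sc, unfolded swsum_eq_swsum2]
  swsum_counit_left[where s="(*)", unfolded swsum_eq_swsum2]
  swsum_counit_right[where s="(*)", unfolded swsum_eq_swsum2]
  swsum_fubini[symmetric]
  lin_swsum[OF lin_scalar[OF vs], symmetric] lin_swsum[OF lin_mult_const, symmetric]
  lin_swsum2[OF lin_scalar[OF vs], symmetric] lin_swsum2[OF lin_mult_const, symmetric]
  sc_mult mult.assoc eps_mul eps_hit

section \<open>The subadjacent Hopf algebra\<close>

lemma hit_unit_right: "hit x u = sc (eps x) u"
proof -
  have split: "hit p w = D (\<lambda>a b. mul (hit a u) (hit b w)) p" for p w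
    using hit_mul[of p u w] by simp
  have "sc (eps x) z = D (\<lambda>p q. hit p (\<beta> q z)) x" for z by (simp add: hit_beta)
  also have "\<dots> z = D (\<lambda>p q. D (\<lambda>a b. mul (hit a u) (hit b (\<beta> q z))) p) x" for z
    by (rule swsum_cong, rule split)
  also have "\<dots> z = D (\<lambda>a r. mul (hit a u) (D (\<lambda>b q. hit b (\<beta> q z)) r)) x" for z
    by (simp add: sweedler_simps)
  also have "\<dots> z = mul (hit x u) z" for z by (simp add: sweedler_simps hit_beta)
  finally have "sc (eps x) u = hit x u" by simp
  then show ?thesis by simp
qed

lemma beta_unit_right: "\<beta> x u = sc (eps x) u"
proof -
  have "sc (eps x) u = D (\<lambda>a b. \<beta> a (hit b u)) x" by (simp add: beta_hit)
  also have "\<dots> = \<beta> x u" by (simp add: hit_unit_right sweedler_simps)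
  finally show ?thesis by simp
qed

lemma bul_unit_unit: "bu u u = u"
  by (subst bul_def, subst swsum_unit[OF vs]) (simp_all add: lin_intros hit_unit_right)

text \<open>\<open>\<alpha>(1)\<close> is an idempotent with right inverse \<open>\<beta>(1)\<close>, hence the identity.\<close>
lemma hit_unit_left [simp]: "hit u y = y"
proof -
  have "hit u (\<beta> u y) = y"
    using hit_beta[of y u] by (subst (asm) swsum_unit[OF vs]) (simp_all add: lin_intros)
  moreover have "hit u (hit u z) = hit u z" for z
    by (simp add: hit_hit bul_unit_unit)
  ultimately show ?thesis by metis
qed

lemma beta_unit_left [simp]: "\<beta> u y = y"
  using hit_beta[of y u] by (subst (asm) swsum_unit[OF vs]) (simp_all add: lin_intros)

lemma bul_unit_left [simp]: "bu u x = x"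
  by (subst bul_def, subst swsum_unit[OF vs]) (simp_all add: lin_intros)

lemma bul_unit_right [simp]: "bu x u = x"
  unfolding bul_def by (simp add: hit_unit_right sweedler_simps)

lemma S_unit [simp]: "S u = u"
  using antipode_right[of u] by (subst (asm) swsum_unit[OF vs]) (simp_all add: lin_intros)

lemma Sh_unit [simp]: "T u = u"
  unfolding Sh_def by (subst swsum_unit[OF vs]) (simp_all add: lin_intros)

lemma eps_S [simp]: "eps (S x) = eps x"
proof -
  have "eps (D (\<lambda>a b. mul a (S b)) x) = eps x" by (simp add: antipode_right lin_partial_scale)
  then show ?thesis by (simp add: sweedler_simps)
qed

lemma eps_beta [simp]: "eps (\<beta> x y) = eps x * eps y"
proof -
  have "eps (D (\<lambda>a b. hit a (\<beta> b y)) x) = eps x * eps y" by (simp add: hit_beta lin_partial_scale)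
  then show ?thesis by (simp add: sweedler_simps)
qed

lemma eps_Sh [simp]: "eps (T x) = eps x"
  unfolding Sh_def by (simp add: sweedler_simps)

lemma eps_bul [simp]: "eps (bu x y) = eps x * eps y"
  unfolding bul_def by (simp add: sweedler_simps)

context
  fixes s :: "'k \<Rightarrow> 'v::ab_group_add \<Rightarrow> 'v"
  assumes s: "Vector_Spaces.vector_space s"
begin

lemmas sweedler_simps_target =
  lin_swsum_fun[OF s] lin_swsum2_fun[OF s]
  lin_comp[OF _ lin_swsum_arg[OF tlin_cop s]] lin_comp[OF _ lin_swsum2_arg[OF tlin_cop s]]
  lin_swsum_arg[OF tlin_cop s, THEN lin_swsum] lin_swsum_arg[OF tlin_cop s, THEN lin_swsum2]
  lin_swsum2_arg[OF tlin_cop s, THEN lin_swsum] lin_swsum2_arg[OF tlin_cop s, THEN lin_swsum2]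
  lin_swsum_arg[OF tlin_cop s, THEN lin_scale] lin_swsum2_arg[OF tlin_cop s, THEN lin_scale]
  swsum_coassoc[OF s] swsum2_coassoc[OF s]
  swsum_counit_left[where s=s] swsum_counit_right[where s=s]
  swsum_counit_left[where s=s, unfolded swsum_eq_swsum2]
  swsum_counit_right[where s=s, unfolded swsum_eq_swsum2]
  lin_swsum[OF lin_scalar[OF s], symmetric] lin_swsum2[OF lin_scalar[OF s], symmetric]

lemma swsum_hit:
  assumes g1: "\<And>b. lin sc s (\<lambda>a. G a b)" and g2: "\<And>a. lin sc s (\<lambda>b. G a b)"
  shows "D G (hit x y) = D (\<lambda>x1 x2. E (\<lambda>y1 y2. G (hit x1 y1) (hit x2 y2)) y) x"
  using teq2_sum_eq[OF cop_hit s g1 g2, of x y]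
  by (simp add: swsum_def swsum2_def sum_list_map_concat split_def o_def)

lemma swsum2_hit:
  assumes "\<And>b. lin sc s (\<lambda>a. G a b)" and "\<And>a. lin sc s (\<lambda>b. G a b)"
  shows "E G (hit x y) = D (\<lambda>x1 x2. E (\<lambda>y1 y2. G (hit x1 y1) (hit x2 y2)) y) x"
  using swsum_hit[OF assms] by (simp add: swsum_eq_swsum2)

lemma swsum_mul:
  assumes g1: "\<And>b. lin sc s (\<lambda>a. G a b)" and g2: "\<And>a. lin sc s (\<lambda>b. G a b)"
  shows "D G (mul x y)
    = D (\<lambda>p c. D (\<lambda>q b. D (\<lambda>a1 a2. E (\<lambda>y1 y2. G (mul a1 (hit a2 (\<beta> c y1))) (mul b y2)) y) q) p) x"
  using teq2_sum_eq[OF cop_mul s g1 g2, of x y]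
  by (simp add: swsum_def swsum2_def sum_list_map_concat split_def o_def cop4_def cop3_def)

lemma swsum_bul:
  assumes g1: "\<And>b. lin sc s (\<lambda>a. G a b)" and g2: "\<And>a. lin sc s (\<lambda>b. G a b)"
  shows "D G (bu x y) = D (\<lambda>x1 x2. E (\<lambda>y1 y2. G (bu x1 y1) (bu x2 y2)) y) x"
proof -
  note lin_G = lin_comp[OF _ g1] lin_comp[OF _ g2] lin_swsum[OF g1] lin_swsum[OF g2]
    lin_swsum2[OF g1] lin_swsum2[OF g2] lin_scale[OF g1] lin_scale[OF g2] sweedler_simps_target
  have "D G (bu x y) = D (\<lambda>a1 r1. D (\<lambda>a2 r2. D (\<lambda>b' r3. D (\<lambda>m b2. E (\<lambda>y1 y2.
      G (mul a1 (hit a2 (D (\<lambda>c b1. \<beta> c (hit b1 y1)) m))) (mul b' (hit b2 y2))) y) r3) r2) r1) x"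
    by (simp add: bul_def sweedler_simps lin_G g1 g2 swsum_mul swsum2_hit)
  also have "\<dots> = D (\<lambda>x1 x2. E (\<lambda>y1 y2. G (bu x1 y1) (bu x2 y2)) y) x"
    by (simp add: bul_def sweedler_simps lin_G g1 g2 beta_hit)
  finally show ?thesis .
qed

lemma swsum2_bul:
  assumes "\<And>b. lin sc s (\<lambda>a. G a b)" and "\<And>a. lin sc s (\<lambda>b. G a b)"
  shows "E G (bu x y) = D (\<lambda>x1 x2. E (\<lambda>y1 y2. G (bu x1 y1) (bu x2 y2)) y) x"
  using swsum_bul[OF assms] by (simp add: swsum_eq_swsum2)

lemma swsum_Sh:
  assumes g1: "\<And>b. lin sc s (\<lambda>a. G a b)" and g2: "\<And>a. lin sc s (\<lambda>b. G a b)"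
  shows "D G (T x) = D (\<lambda>a b. G (T b) (T a)) x"
  using teq2_sum_eq[OF cop_Sh s g1 g2, of x] by (simp add: swsum_def split_def o_def)

lemma swsum2_Sh:
  assumes "\<And>b. lin sc s (\<lambda>a. G a b)" and "\<And>a. lin sc s (\<lambda>b. G a b)"
  shows "E G (T x) = E (\<lambda>a b. G (T b) (T a)) x"
  using swsum_Sh[OF assms] by (simp add: swsum_eq_swsum2)

lemma swsum2_Sh_swsum:
  assumes "\<And>b. lin sc s (\<lambda>a. G a b)" and "\<And>a. lin sc s (\<lambda>b. G a b)"
  shows "E G (T x) = D (\<lambda>a b. G (T b) (T a)) x"
  using swsum_Sh[OF assms] by (simp add: swsum_eq_swsum2)

lemma swsum_hit_lhit_swap:
  assumes g1: "\<And>b. lin sc s (\<lambda>a. G a b)" and g2: "\<And>a. lin sc s (\<lambda>b. G a b)"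
  shows "D (\<lambda>x1 x2. E (\<lambda>y1 y2. G (hit x1 y1) (lh x2 y2)) y) x
    = D (\<lambda>x1 x2. E (\<lambda>y1 y2. G (hit x2 y2) (lh x1 y1)) y) x"
  using teq2_sum_eq[OF cop_hit_lhit_swap[where x=x and y=y] s g1 g2]
  by (simp add: swsum_def swsum2_def sum_list_map_concat split_def o_def)

end

lemma bul_assoc: "bu (bu x y) z = bu x (bu y z)"
proof -
  have "bu (bu x y) z = D (\<lambda>p q. mul p (hit q z)) (bu x y)" by (simp add: bul_def[of mul cop hit "bu x y" z])
  also have "\<dots> = D (\<lambda>x1 x2. E (\<lambda>y1 y2. mul (bu x1 y1) (hit (bu x2 y2) z)) y) x"
    by (rule swsum_bul[OF vs]) (simp_all add: lin_intros)
  also have "\<dots> = D (\<lambda>x1 x2. E (\<lambda>y1 y2. mul (bu x1 y1) (hit x2 (hit y2 z))) y) x"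
    by (simp add: hit_hit)
  also have "\<dots> = D (\<lambda>a c. mul a (hit c (E (\<lambda>y1 y2. mul y1 (hit y2 z)) y))) x"
    by (simp add: bul_def sweedler_simps hit_mul mul_assoc)
  also have "\<dots> = bu x (bu y z)" by (simp add: bul_def swsum_eq_swsum2)
  finally show ?thesis .
qed

lemma bul_antipode_right: "D (\<lambda>a b. bu a (T b)) y = sc (eps y) u"
proof -
  have "D (\<lambda>a b. bu a (T b)) y = D (\<lambda>y1 r. D (\<lambda>m y4. mul y1 (D (\<lambda>y2 y3. hit y2 (\<beta> y3 (S y4))) m)) r) y"
    by (simp add: bul_def Sh_def sweedler_simps)
  also have "\<dots> = sc (eps y) u" by (simp add: sweedler_simps hit_beta antipode_right)
  finally show ?thesis .
qed

lemma eq_beta_if_right_inverse: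
  assumes G: "lin sc sc G" and h: "\<And>x. D (\<lambda>p q. hit p (G q)) x = sc (eps x) v"
  shows "G x = \<beta> x v"
proof -
  have "\<beta> x v = D (\<lambda>p q. \<beta> p (D (\<lambda>a b. hit a (G b)) q)) x" by (simp add: h sweedler_simps)
  also have "\<dots> = D (\<lambda>c b. D (\<lambda>p a. \<beta> p (hit a (G b))) c) x" by (simp add: sweedler_simps G)
  also have "\<dots> = G x" by (simp add: sweedler_simps G beta_hit)
  finally show ?thesis by simp
qed

lemma hit_Sh [simp]: "hit (T y) w = \<beta> y w"
proof (rule eq_beta_if_right_inverse[where G="\<lambda>b. hit (T b) w"])
  show "lin sc sc (\<lambda>b. hit (T b) w)" by (simp add: lin_intros)
  fix x
  have "D (\<lambda>a b. hit a (hit (T b) w)) x = hit (D (\<lambda>a b. bu a (T b)) x) w"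
    by (simp add: hit_hit lin_partial_swsum)
  also have "\<dots> = sc (eps x) w" by (simp add: bul_antipode_right lin_partial_scale)
  finally show "D (\<lambda>p q. hit p (hit (T q) w)) x = sc (eps x) w" .
qed

lemma beta_mul: "\<beta> x (mul a b) = D (\<lambda>x1 x2. mul (\<beta> x2 a) (\<beta> x1 b)) x"
proof (rule eq_beta_if_right_inverse[symmetric])
  show "lin sc sc (\<lambda>q. D (\<lambda>r s. mul (\<beta> s a) (\<beta> r b)) q)" by (simp add: lin_intros)
  fix x
  have "D (\<lambda>p q. hit p (D (\<lambda>r s. mul (\<beta> s a) (\<beta> r b)) q)) x
     = D (\<lambda>x1 r1. D (\<lambda>m x4. mul (hit x1 (\<beta> x4 a)) (D (\<lambda>x2 x3. hit x2 (\<beta> x3 b)) m)) r1) x"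
    by (simp add: sweedler_simps hit_mul)
  also have "\<dots> = D (\<lambda>x1 x4. mul (hit x1 (\<beta> x4 a)) b) x" by (simp add: sweedler_simps hit_beta)
  also have "\<dots> = mul (D (\<lambda>x1 x4. hit x1 (\<beta> x4 a)) x) b" by (simp add: lin_partial_swsum)
  also have "\<dots> = sc (eps x) (mul a b)" by (simp add: hit_beta lin_partial_scale)
  finally show "D (\<lambda>p q. hit p (D (\<lambda>r s. mul (\<beta> s a) (\<beta> r b)) q)) x = sc (eps x) (mul a b)" .
qed

lemma bul_antipode_left: "D (\<lambda>a b. bu (T a) b) x = sc (eps x) u"
proof -
  have "D (\<lambda>a b. bu (T a) b) x = D (\<lambda>a b. D (\<lambda>p q. mul p (hit q b)) (T a)) x"
    by (simp add: bul_def)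
  also have "\<dots> = D (\<lambda>a b. D (\<lambda>a1 a2. mul (T a2) (\<beta> a1 b)) a) x"
    by (subst swsum_Sh[OF vs]) (simp_all add: lin_intros)
  also have "\<dots> = D (\<lambda>p r. \<beta> p (D (\<lambda>x3 x4. mul (S x3) x4) r)) x"
    by (simp add: Sh_def sweedler_simps beta_mul)
  also have "\<dots> = sc (eps x) u" by (simp add: antipode_left sweedler_simps beta_unit_right)
  finally show ?thesis .
qed

lemma Sh_bul: "T (bu x y) = bu (T y) (T x)"
proof -
  have left: "D (\<lambda>x1 x2. E (\<lambda>y1 y2. bu (T (bu x1 y1)) (bu x2 y2)) y) x = sc (eps x * eps y) u" for x y
    using swsum_bul[OF vs, of "\<lambda>a b. bu (T a) b" x y] by (simp add: lin_intros bul_antipode_left)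
  have right: "D (\<lambda>x1 x2. E (\<lambda>y1 y2. bu x1 (bu y1 (bu (T y2) (T x2)))) y) x = sc (eps x * eps y) u" for x y
  proof -
    have "D (\<lambda>x1 x2. E (\<lambda>y1 y2. bu x1 (bu y1 (bu (T y2) (T x2)))) y) x
       = D (\<lambda>x1 x2. bu x1 (bu (E (\<lambda>y1 y2. bu y1 (T y2)) y) (T x2))) x"
      by (simp add: sweedler_simps bul_assoc)
    also have "\<dots> = sc (eps y) (D (\<lambda>x1 x2. bu x1 (T x2)) x)"
      by (simp add: bul_antipode_right[unfolded swsum_eq_swsum2] sweedler_simps)
    also have "\<dots> = sc (eps x * eps y) u" by (simp add: bul_antipode_right sc_mult[symmetric] mult.commute)
    finally show ?thesis .
  qed
  have "T (bu x y) = D (\<lambda>x1 r. E (\<lambda>y1 s. bu (T (bu x1 y1))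
         (D (\<lambda>x2 x3. E (\<lambda>y2 y3. bu x2 (bu y2 (bu (T y3) (T x3)))) s) r)) y) x"
    by (simp add: right sweedler_simps)
  also have "\<dots> = D (\<lambda>m x3. E (\<lambda>n y3. bu (D (\<lambda>x1 x2. E (\<lambda>y1 y2. bu (T (bu x1 y1)) (bu x2 y2)) n) m)
         (bu (T y3) (T x3))) y) x"
    by (simp add: sweedler_simps bul_assoc)
  also have "\<dots> = bu (T y) (T x)"
    by (simp add: left sweedler_simps)
  finally show ?thesis .
qed

section \<open>The adjoint coaction\<close>

lemma lhit_eq: "lh x y = D (\<lambda>x1 x2. E (\<lambda>y1 y2. bu (T (hit x1 y1)) (bu x2 y2)) y) x"
  unfolding lhit_def swsum2_def by (rule swsum_cong, rule swsum_cong, rule bul_assoc)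

lemma bil_lhit: "bilin sc sc sc lh"
  unfolding bilin_def lhit_eq by (simp add: lin_intros)

lemma eps_lhit [simp]: "eps (lh x y) = eps x * eps y"
  unfolding lhit_eq by (simp add: sweedler_simps)

lemmas lhit_simps = sweedler_simps bilin_lin_left[OF bil_lhit] bilin_lin_right[OF bil_lhit]
  bilin_lin_left[OF bil_lhit lin_id, THEN lin_swsum] bilin_lin_right[OF bil_lhit lin_id, THEN lin_swsum]
  bilin_lin_left[OF bil_lhit lin_id, THEN lin_swsum2] bilin_lin_right[OF bil_lhit lin_id, THEN lin_swsum2]
  bilin_lin_left[OF bil_lhit lin_id, THEN lin_scale] bilin_lin_right[OF bil_lhit lin_id, THEN lin_scale]

lemma bul_hit_lhit: "D (\<lambda>a1 a2. E (\<lambda>v1 v2. bu (hit a1 v1) (lh a2 v2)) v) a = bu a v"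
proof -
  have "D (\<lambda>a1 a2. E (\<lambda>v1 v2. bu (hit a1 v1) (lh a2 v2)) v) a
      = D (\<lambda>m a3. E (\<lambda>n v3. bu (D (\<lambda>p q. bu p (T q)) (hit m n)) (bu a3 v3)) v) a"
    by (simp add: lhit_eq lhit_simps swsum_hit[OF vs] bul_assoc)
  also have "\<dots> = bu a v" by (simp add: bul_antipode_right lhit_simps)
  finally show ?thesis .
qed

lemma swsum_lhit:
  assumes s: "Vector_Spaces.vector_space s"
    and g1: "\<And>b. lin sc s (\<lambda>a. G a b)" and g2: "\<And>a. lin sc s (\<lambda>b. G a b)"
  shows "D G (lh a v) = D (\<lambda>a1 a2. E (\<lambda>v1 v2. G (lh a1 v1) (lh a2 v2)) v) a"
proof -
  note lin_G = lin_comp[OF _ g1] lin_comp[OF _ g2] lin_swsum[OF g1] lin_swsum[OF g2]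
     lin_swsum2[OF g1] lin_swsum2[OF g2] lin_scale[OF g1] lin_scale[OF g2] g1 g2
     sweedler_simps_target[OF s]
  have swap: "D (\<lambda>a1 a2. E (\<lambda>v1 v2. G (lh a2 v2) (bu (T (hit a1 v1)) (bu a3 v3))) q) p
          = D (\<lambda>a1 a2. E (\<lambda>v1 v2. G (lh a1 v1) (bu (T (hit a2 v2)) (bu a3 v3))) q) p" for a3 v3 p q
    using swsum_hit_lhit_swap[OF s, where G="\<lambda>h l. G l (bu (T h) (bu a3 v3))" and x=p and y=q]
    by (simp add: lin_intros lin_G)
  have "D G (lh a v) = D (\<lambda>a1 r1. D (\<lambda>a2 r2. D (\<lambda>a3 a4. E (\<lambda>v1 s1. E (\<lambda>v2 s2. E (\<lambda>v3 v4.
          G (bu (T (hit a2 v2)) (D (\<lambda>p q. E (\<lambda>r s. bu (hit p r) (lh q s)) v3) a3)) (bu (T (hit a1 v1)) (bu a4 v4))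
          ) s2) s1) v) r2) r1) a"
    by (simp only: bul_hit_lhit, simp add: lhit_eq lhit_simps lin_G swsum_bul[OF s] swsum2_bul[OF s]
        swsum_Sh[OF s] swsum2_Sh[OF s] swsum_hit[OF s] swsum2_hit[OF s])
  also have "\<dots> = D (\<lambda>a1 r1. D (\<lambda>m r2. D (\<lambda>a4 a5. E (\<lambda>v1 s1. E (\<lambda>n s2. E (\<lambda>v4 v5.
          G (bu (D (\<lambda>p q. bu (T p) q) (hit m n)) (lh a4 v4)) (bu (T (hit a1 v1)) (bu a5 v5))
          ) s2) s1) v) r2) r1) a"
    by (simp add: lhit_simps lin_G swsum_hit[OF s] swsum_hit[OF vs] swsum2_hit[OF s] bul_assoc)
  also have "\<dots> = D (\<lambda>p a3. E (\<lambda>q v3. D (\<lambda>a1 a2. E (\<lambda>v1 v2. G (lh a2 v2) (bu (T (hit a1 v1)) (bu a3 v3))) q) p) v) a"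
    by (simp add: lhit_simps lin_G bul_antipode_left)
  also have "\<dots> = D (\<lambda>p a3. E (\<lambda>q v3. D (\<lambda>a1 a2. E (\<lambda>v1 v2. G (lh a1 v1) (bu (T (hit a2 v2)) (bu a3 v3))) q) p) v) a"
    by (simp only: swap)
  also have "\<dots> = D (\<lambda>a1 p. E (\<lambda>v1 q. G (lh a1 v1) (D (\<lambda>a2 a3. E (\<lambda>v2 v3. bu (T (hit a2 v2)) (bu a3 v3)) q) p)) v) a"
    by (simp add: lhit_simps lin_G)
  also have "\<dots> = D (\<lambda>a1 a2. E (\<lambda>v1 v2. G (lh a1 v1) (lh a2 v2)) v) a"
    by (simp only: lhit_eq[symmetric])
  finally show ?thesis .
qed

lemma adL_hit_core:
  assumes f: "bilin sc sc (*) f"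
  shows "D (\<lambda>p a3. D (\<lambda>a1 a2. f (bu a1 (T a3)) a2) p) (hit a v)
     = D (\<lambda>p a3. D (\<lambda>a1 a2. E (\<lambda>q v3. E (\<lambda>v1 v2. f (bu (bu a1 (bu v1 (T v3))) (T a3)) (hit a2 v2)) q) v) p) a"
proof -
  txt \<open>Both products are factored as \<open>x \<bullet> y = (x\<^sub>1 \<rightharpoonup> y\<^sub>1) \<bullet> (x\<^sub>2 \<leftharpoonup> y\<^sub>2)\<close>; two applications
    of (P6) bring the \<open>\<leftharpoonup>\<close>-factors together, where they cancel against each other because
    \<open>\<leftharpoonup>\<close> is comultiplicative.\<close>
  note lin_f = bilin_simps[OF f]
  define factor where "factor = (\<lambda>x y. D (\<lambda>b1 b2. E (\<lambda>c1 c2. bu (hit b1 c1) (lh b2 c2)) y) x)"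
  have factor_eq: "factor x y = bu x y" for x y unfolding factor_def by (rule bul_hit_lhit)
  have swap1: "D (\<lambda>a2 a3. E (\<lambda>v2 v3. f (bu (hit a1 v1) (bu (lh a2 v2) (bu (T (lh a5 v5)) (T (hit a4 v4))))) (hit a3 v3)) q) p
           = D (\<lambda>a2 a3. E (\<lambda>v2 v3. f (bu (hit a1 v1) (bu (lh a3 v3) (bu (T (lh a5 v5)) (T (hit a4 v4))))) (hit a2 v2)) q) p"
    for a1 v1 a4 v4 a5 v5 p q
    using swsum_hit_lhit_swap[OF vector_space_field,
        where G="\<lambda>h l. f (bu (hit a1 v1) (bu l (bu (T (lh a5 v5)) (T (hit a4 v4))))) h" and x=p and y=q]
    by (simp add: lhit_simps lin_f)
  have swap2: "D (\<lambda>a3 a4. E (\<lambda>v3 v4. f (bu (hit a1 v1) (bu (lh a3 v3) (bu (T (lh a5 v5)) (T (hit a4 v4))))) (hit a2 v2)) q) p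
           = D (\<lambda>a3 a4. E (\<lambda>v3 v4. f (bu (hit a1 v1) (bu (lh a4 v4) (bu (T (lh a5 v5)) (T (hit a3 v3))))) (hit a2 v2)) q) p"
    for a1 v1 a2 v2 a5 v5 p q
    using swsum_hit_lhit_swap[OF vector_space_field,
        where G="\<lambda>h l. f (bu (hit a1 v1) (bu l (bu (T (lh a5 v5)) (T h)))) (hit a2 v2)" and x=p and y=q]
    by (simp add: lhit_simps lin_f)
  have "D (\<lambda>p a3. D (\<lambda>a1 a2. E (\<lambda>q v3. E (\<lambda>v1 v2. f (bu (bu a1 (bu v1 (T v3))) (T a3)) (hit a2 v2)) q) v) p) a
      = D (\<lambda>p a3. E (\<lambda>q v3. D (\<lambda>a1 a2. E (\<lambda>v1 v2. f (bu (factor a1 v1) (T (factor a3 v3))) (hit a2 v2)) q) p) v) a"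
    by (simp only: factor_eq, simp add: lhit_simps lin_f Sh_bul bul_assoc)
  also have "\<dots> = D (\<lambda>a1 r. E (\<lambda>v1 s. D (\<lambda>p r'. E (\<lambda>q s'. D (\<lambda>a4 a5. E (\<lambda>v4 v5.
        D (\<lambda>a2 a3. E (\<lambda>v2 v3. f (bu (hit a1 v1) (bu (lh a2 v2) (bu (T (lh a5 v5)) (T (hit a4 v4))))) (hit a3 v3)) q) p
        ) s') r') s) r) v) a"
    by (simp add: factor_def lhit_simps lin_f Sh_bul bul_assoc)
  also have "\<dots> = D (\<lambda>a1 r. E (\<lambda>v1 s. D (\<lambda>p r'. E (\<lambda>q s'. D (\<lambda>a4 a5. E (\<lambda>v4 v5.
        D (\<lambda>a2 a3. E (\<lambda>v2 v3. f (bu (hit a1 v1) (bu (lh a3 v3) (bu (T (lh a5 v5)) (T (hit a4 v4))))) (hit a2 v2)) q) p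
        ) s') r') s) r) v) a"
    by (simp only: swap1)
  also have "\<dots> = D (\<lambda>a1 r1. E (\<lambda>v1 s1. D (\<lambda>a2 r2. E (\<lambda>v2 s2. D (\<lambda>p a5. E (\<lambda>q v5.
        D (\<lambda>a3 a4. E (\<lambda>v3 v4. f (bu (hit a1 v1) (bu (lh a3 v3) (bu (T (lh a5 v5)) (T (hit a4 v4))))) (hit a2 v2)) q) p
        ) s2) r2) s1) r1) v) a"
    by (simp add: lhit_simps lin_f)
  also have "\<dots> = D (\<lambda>a1 r1. E (\<lambda>v1 s1. D (\<lambda>a2 r2. E (\<lambda>v2 s2. D (\<lambda>p a5. E (\<lambda>q v5.
        D (\<lambda>a3 a4. E (\<lambda>v3 v4. f (bu (hit a1 v1) (bu (lh a4 v4) (bu (T (lh a5 v5)) (T (hit a3 v3))))) (hit a2 v2)) q) p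
        ) s2) r2) s1) r1) v) a"
    by (simp only: swap2)
  also have "\<dots> = D (\<lambda>a1 r1. E (\<lambda>v1 s1. D (\<lambda>a2 r2. E (\<lambda>v2 s2. D (\<lambda>a3 m. E (\<lambda>v3 n.
        f (bu (hit a1 v1) (bu (D (\<lambda>p q. bu p (T q)) (lh m n)) (T (hit a3 v3)))) (hit a2 v2)
        ) s2) r2) s1) r1) v) a"
    by (simp add: lhit_simps lin_f swsum_lhit[OF vs] bul_assoc)
  also have "\<dots> = D (\<lambda>p a3. D (\<lambda>a1 a2. f (bu a1 (T a3)) a2) p) (hit a v)"
    by (simp add: lhit_simps lin_f bul_antipode_right swsum_hit[OF vector_space_field])
  finally show ?thesis by simp
qed

lemma swsum_beta:
  assumes s: "Vector_Spaces.vector_space s"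
    and g1: "\<And>b. lin sc s (\<lambda>a. G a b)" and g2: "\<And>a. lin sc s (\<lambda>b. G a b)"
  shows "D G (\<beta> x y) = D (\<lambda>x1 x2. E (\<lambda>y1 y2. G (\<beta> x2 y1) (\<beta> x1 y2)) y) x"
proof -
  have "D G (\<beta> x y) = D G (hit (T x) y)" by simp
  also have "\<dots> = D (\<lambda>x1 x2. E (\<lambda>y1 y2. G (hit x1 y1) (hit x2 y2)) y) (T x)"
    by (rule swsum_hit[OF s g1 g2])
  also have "\<dots> = D (\<lambda>x1 x2. E (\<lambda>y1 y2. G (hit (T x2) y1) (hit (T x1) y2)) y) x"
    by (rule swsum_Sh[OF s])
      (simp_all add: lin_intros lin_comp[OF _ g1] lin_comp[OF _ g2] sweedler_simps_target[OF s])
  finally show ?thesis by simp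
qed

lemma swsum2_beta:
  assumes "Vector_Spaces.vector_space s"
    and "\<And>b. lin sc s (\<lambda>a. G a b)" and "\<And>a. lin sc s (\<lambda>b. G a b)"
  shows "E G (\<beta> x y) = D (\<lambda>x1 x2. E (\<lambda>y1 y2. G (\<beta> x2 y1) (\<beta> x1 y2)) y) x"
  using swsum_beta[OF assms] by (simp add: swsum_eq_swsum2)

lemma mul_eq_bul_beta: "mul x y = D (\<lambda>a b. bu a (\<beta> b y)) x"
proof -
  have "D (\<lambda>a b. bu a (\<beta> b y)) x = D (\<lambda>a1 r. mul a1 (D (\<lambda>a2 b. hit a2 (\<beta> b y)) r)) x"
    by (simp add: bul_def sweedler_simps)
  also have "\<dots> = mul x y" by (simp add: hit_beta sweedler_simps)
  finally show ?thesis by simp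
qed

lemma adL_mul_core:
  assumes f: "bilin sc sc (*) f"
  shows "D (\<lambda>p a3. D (\<lambda>a1 a2. f (bu a1 (T a3)) a2) p) (mul x y)
     = D (\<lambda>p a3. D (\<lambda>a1 a2. E (\<lambda>q b3. E (\<lambda>b1 b2. f (bu (bu a1 (T a3)) (bu b1 (T b3))) (mul a2 b2)) q) y) p) x"
proof -
  note lin_f = bilin_simps[OF f]
  have hit_Sh: "D (\<lambda>p' a3'. D (\<lambda>a1' a2'. f (bu a1 (bu (bu a1' (T a3')) (T a3))) (bu a2 a2')) p') (hit (T c) y)
     = D (\<lambda>p' a3'. D (\<lambda>a1' a2'. E (\<lambda>q v3. E (\<lambda>v1 v2.
         f (bu a1 (bu (bu (bu a1' (bu v1 (T v3))) (T a3')) (T a3))) (bu a2 (hit a2' v2))) q) y) p') (T c)"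
    for a1 a2 a3 c
    using adL_hit_core[of "\<lambda>m z0. f (bu a1 (bu m (T a3))) (bu a2 z0)" "T c" y]
    by (simp add: lin_intros lin_f bilin_def)
  have "D (\<lambda>p a3. D (\<lambda>a1 a2. f (bu a1 (T a3)) a2) p) (mul x y)
     = D (\<lambda>a x'. D (\<lambda>p a3. D (\<lambda>a1 a2. D (\<lambda>p' a3'. D (\<lambda>a1' a2'.
         f (bu a1 (bu (bu a1' (T a3')) (T a3))) (bu a2 a2')) p') (hit (T x') y)) p) a) x"
    by (simp add: lhit_simps lin_f mul_eq_bul_beta bul_assoc Sh_bul
        swsum_bul[OF vector_space_field] swsum2_bul[OF vector_space_field]
        swsum_beta[OF vector_space_field] swsum2_beta[OF vector_space_field])
  also have "\<dots> = D (\<lambda>a x'. D (\<lambda>p a3. D (\<lambda>a1 a2. D (\<lambda>p' a3'. D (\<lambda>a1' a2'. E (\<lambda>q v3. E (\<lambda>v1 v2.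
         f (bu a1 (bu (bu (bu a1' (bu v1 (T v3))) (T a3')) (T a3))) (bu a2 (hit a2' v2))) q) y) p') (T x')) p) a) x"
    by (simp only: hit_Sh)
  also have "\<dots> = D (\<lambda>x1 r1. D (\<lambda>x2 r2. D (\<lambda>m r3. D (\<lambda>x5 x6. E (\<lambda>v1 s. E (\<lambda>v2 v3.
       f (bu x1 (bu (T x6) (bu v1 (bu (T v3) (T (D (\<lambda>p q. bu p (T q)) m)))))) (bu x2 (\<beta> x5 v2))) s) y) r3) r2) r1) x"
    by (simp add: lhit_simps lin_f swsum_Sh[OF vector_space_field] Sh_bul bul_assoc)
  also have "\<dots> = D (\<lambda>p a3. D (\<lambda>a1 a2. E (\<lambda>q b3. E (\<lambda>b1 b2. f (bu (bu a1 (T a3)) (bu b1 (T b3))) (mul a2 b2)) q) y) p) x"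
    by (simp add: lhit_simps lin_f bul_antipode_right mul_eq_bul_beta bul_assoc)
  finally show ?thesis .
qed

lemma S_hit: "S (hit a x) = hit a (S x)"
proof -
  have right: "D (\<lambda>a1 a2. E (\<lambda>x1 x2. mul (hit a1 x1) (hit a2 (S x2))) x) a = sc (eps x) (sc (eps a) u)" for a x
  proof -
    have "D (\<lambda>a1 a2. E (\<lambda>x1 x2. mul (hit a1 x1) (hit a2 (S x2))) x) a = hit a (E (\<lambda>x1 x2. mul x1 (S x2)) x)"
      by (simp add: sweedler_simps hit_mul)
    also have "\<dots> = sc (eps x) (sc (eps a) u)"
      by (simp add: antipode_right[unfolded swsum_eq_swsum2] lin_partial_scale hit_unit_right)
    finally show ?thesis .
  qed
  have left: "D (\<lambda>a1 a2. E (\<lambda>x1 x2. mul (S (hit a1 x1)) (hit a2 x2)) x) a = sc (eps a) (sc (eps x) u)" for a x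
    using swsum_hit[OF vs, of "\<lambda>p q. mul (S p) q" a x]
    by (simp add: lin_intros antipode_left sc_mult eps_hit)
  have "S (hit a x) = D (\<lambda>a1 r. E (\<lambda>x1 s. mul (S (hit a1 x1))
       (D (\<lambda>a2 a3. E (\<lambda>x2 x3. mul (hit a2 x2) (hit a3 (S x3))) s) r)) x) a"
    by (simp add: right sweedler_simps)
  also have "\<dots> = D (\<lambda>m a3. E (\<lambda>n x3. mul (D (\<lambda>a1 a2. E (\<lambda>x1 x2. mul (S (hit a1 x1)) (hit a2 x2)) n) m)
       (hit a3 (S x3))) x) a"
    by (simp add: sweedler_simps mul_assoc)
  also have "\<dots> = hit a (S x)" by (simp add: left sweedler_simps)
  finally show ?thesis .
qed

lemma S_eq_hit_Sh: "S x = D (\<lambda>a b. hit a (T b)) x"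
proof -
  have "D (\<lambda>a b. hit a (T b)) x = D (\<lambda>m d. D (\<lambda>a c. hit a (\<beta> c (S d))) m) x"
    by (simp add: Sh_def sweedler_simps)
  also have "\<dots> = S x" by (simp add: hit_beta sweedler_simps)
  finally show ?thesis by simp
qed

lemma adL_S_core:
  assumes f: "bilin sc sc (*) f"
  shows "D (\<lambda>p a3. D (\<lambda>a1 a2. f (bu a1 (T a3)) a2) p) (S x) = D (\<lambda>p a3. D (\<lambda>a1 a2. f (bu a1 (T a3)) (S a2)) p) x"
proof -
  note lin_f = bilin_simps[OF f]
  have hit_Sh: "D (\<lambda>a1 r. D (\<lambda>a2 a3. f (bu a1 (T a3)) a2) r) (hit a (T b))
    = D (\<lambda>p a3. D (\<lambda>a1 a2. E (\<lambda>q v3. E (\<lambda>v1 v2. f (bu (bu a1 (bu v1 (T v3))) (T a3)) (hit a2 v2)) q) (T b)) p) a"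
    for a b
    using adL_hit_core[OF f, of a "T b"] by (simp add: lhit_simps lin_f)
  have "D (\<lambda>p a3. D (\<lambda>a1 a2. f (bu a1 (T a3)) a2) p) (S x)
     = D (\<lambda>a b. D (\<lambda>p a3. D (\<lambda>a1 a2. E (\<lambda>q v3. E (\<lambda>v1 v2.
         f (bu (bu a1 (bu v1 (T v3))) (T a3)) (hit a2 v2)) q) (T b)) p) a) x"
    by (subst S_eq_hit_Sh, simp add: lhit_simps lin_f hit_Sh)
  also have "\<dots> = D (\<lambda>x1 r1. D (\<lambda>x2 r2. D (\<lambda>m r3. D (\<lambda>x5 x6.
       f (bu x1 (bu (T x6) (T (D (\<lambda>p q. bu p (T q)) m)))) (hit x2 (T x5))) r3) r2) r1) x"
    by (simp add: lhit_simps lin_f swsum2_Sh_swsum[OF vector_space_field] Sh_bul bul_assoc)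
  also have "\<dots> = D (\<lambda>p a3. D (\<lambda>a1 a2. f (bu a1 (T a3)) (S a2)) p) x"
    by (simp add: lhit_simps lin_f bul_antipode_right S_eq_hit_Sh bul_assoc)
  finally show ?thesis .
qed

lemmas adL_conv = adL_def cop3_def swsum_def swsum2_def sum_list_map_concat split_def o_def

lemma lin_adL_sum:
  assumes f: "bilin sc sc (*) f" shows "lin sc (*) (\<lambda>z. sum_list (map (\<lambda>(a, b). f a b) (ad z)))"
proof -
  have "lin sc (*) (\<lambda>z. D (\<lambda>p a3. D (\<lambda>a1 a2. f (bu a1 (T a3)) a2) p) z)"
    by (simp add: lin_intros bilin_simps[OF f])
  then show ?thesis by (simp add: adL_conv)
qed

lemma tlin_adL: "tlin2 sc ad"
  unfolding tlin2_def teq2_def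
proof (intro conjI allI impI)
  fix x y :: 'h and f :: "'h \<Rightarrow> 'h \<Rightarrow> 'k" assume f: "bilin sc sc (*) f"
  show "sum_list (map (\<lambda>(a, b). f a b) (ad (x + y))) = sum_list (map (\<lambda>(a, b). f a b) (ad x @ ad y))"
    using lin_adL_sum[OF f] unfolding lin_def by simp
next
  fix c :: 'k and x :: 'h and f :: "'h \<Rightarrow> 'h \<Rightarrow> 'k" assume f: "bilin sc sc (*) f"
  have "sum_list (map (\<lambda>(a, b). f a b) (map (\<lambda>(a, b). (sc c a, b)) (ad x)))
      = sum_list (map (\<lambda>(a, b). c * f a b) (ad x))"
    using f unfolding bilin_def lin_def by (simp add: split_def o_def)
  also have "\<dots> = sum_list (map (\<lambda>(a, b). f a b) (ad (sc c x)))"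
    using lin_adL_sum[OF f] unfolding lin_def by (simp add: split_def sum_list_const_mult)
  finally show "sum_list (map (\<lambda>(a, b). f a b) (ad (sc c x)))
      = sum_list (map (\<lambda>(a, b). f a b) (map (\<lambda>(a, b). (sc c a, b)) (ad x)))" by simp
qed

lemma adL_coassoc:
  "teq3 sc [(m1, m2, v0). (m, v0) \<leftarrow> ad v, (m1, m2) \<leftarrow> cop m] [(m, n, w). (m, v0) \<leftarrow> ad v, (n, w) \<leftarrow> ad v0]"
  unfolding teq3_def
proof (intro allI impI)
  fix f :: "'h \<Rightarrow> 'h \<Rightarrow> 'h \<Rightarrow> 'k" assume f: "trilin sc f"
  have "D (\<lambda>p a3. D (\<lambda>a1 a2. D (\<lambda>m1 m2. f m1 m2 a2) (bu a1 (T a3))) p) v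
      = D (\<lambda>p a3. D (\<lambda>a1 a2. D (\<lambda>q b3. D (\<lambda>b1 b2. f (bu a1 (T a3)) (bu b1 (T b3)) b2) q) a2) p) v"
    by (simp add: lhit_simps trilin_simps[OF f] swsum_bul[OF vector_space_field]
        swsum2_bul[OF vector_space_field] swsum_Sh[OF vector_space_field] swsum2_Sh_swsum[OF vector_space_field])
  then show "sum_list (map (\<lambda>(a, b, c). f a b c) [(m1, m2, v0). (m, v0) \<leftarrow> ad v, (m1, m2) \<leftarrow> cop m])
     = sum_list (map (\<lambda>(a, b, c). f a b c) [(m, n, w). (m, v0) \<leftarrow> ad v, (n, w) \<leftarrow> ad v0])"
    by (simp add: adL_conv)
qed

lemma adL_counit: "sum_list (map (\<lambda>(m, v0). sc (eps m) v0) (ad v)) = v"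
proof -
  have "D (\<lambda>p a3. D (\<lambda>a1 a2. sc (eps (bu a1 (T a3))) a2) p) v = v" by (simp add: sweedler_simps)
  then show ?thesis by (simp add: adL_conv)
qed

lemma adL_hit:
  "teq2 sc (ad (hit a v)) [(bu (bu a1 m) (T a3), hit a2 v0). (a1, a2, a3) \<leftarrow> cop3 cop a, (m, v0) \<leftarrow> ad v]"
  unfolding teq2_def using adL_hit_core by (simp add: adL_conv)

lemma adL_mul: "teq2 sc (ad (mul x y)) [(bu m n, mul x0 y0). (m, x0) \<leftarrow> ad x, (n, y0) \<leftarrow> ad y]"
  unfolding teq2_def using adL_mul_core by (simp add: adL_conv)

lemma adL_unit: "teq2 sc (ad u) [(u, u)]"
  unfolding teq2_def
proof (intro allI impI)
  fix f :: "'h \<Rightarrow> 'h \<Rightarrow> 'k" assume f: "bilin sc sc (*) f"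
  have "D (\<lambda>p a3. D (\<lambda>a1 a2. f (bu a1 (T a3)) a2) p) u = f u u"
    by (subst swsum_unit[OF vector_space_field], simp_all add: lin_intros bilin_simps[OF f])+
  then show "sum_list (map (\<lambda>(a, b). f a b) (ad u)) = sum_list (map (\<lambda>(a, b). f a b) [(u, u)])"
    by (simp add: adL_conv)
qed

lemma adL_cop:
  "teq3 sc [(m, c1, c2). (m, c) \<leftarrow> ad x, (c1, c2) \<leftarrow> cop c]
           [(bu m n, a0, b0). (a, b) \<leftarrow> cop x, (m, a0) \<leftarrow> ad a, (n, b0) \<leftarrow> ad b]"
  unfolding teq3_def
proof (intro allI impI)
  fix f :: "'h \<Rightarrow> 'h \<Rightarrow> 'h \<Rightarrow> 'k" assume f: "trilin sc f"
  note lin_f = trilin_simps[OF f]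
  have "D (\<lambda>p a3. D (\<lambda>a1 a2. D (\<lambda>c1 c2. f (bu a1 (T a3)) c1 c2) a2) p) x
      = D (\<lambda>x1 r1. D (\<lambda>x2 r2. D (\<lambda>m r3. D (\<lambda>x5 x6. f (bu x1 (bu (D (\<lambda>p q. bu (T p) q) m) (T x6))) x2 x5) r3) r2) r1) x"
    by (simp add: lhit_simps lin_f bul_antipode_left)
  also have "\<dots> = D (\<lambda>a b. D (\<lambda>p a3. D (\<lambda>a1 a2. D (\<lambda>q b3. D (\<lambda>b1 b2. f (bu (bu a1 (T a3)) (bu b1 (T b3))) a2 b2) q) b) p) a) x"
    by (simp add: lhit_simps lin_f bul_assoc)
  finally show "sum_list (map (\<lambda>(a, b, c). f a b c) [(m, c1, c2). (m, c) \<leftarrow> ad x, (c1, c2) \<leftarrow> cop c])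
      = sum_list (map (\<lambda>(a, b, c). f a b c) [(bu m n, a0, b0). (a, b) \<leftarrow> cop x, (m, a0) \<leftarrow> ad a, (n, b0) \<leftarrow> ad b])"
    by (simp add: adL_conv)
qed

lemma adL_eps: "sum_list (map (\<lambda>(m, c). sc (eps c) m) (ad x)) = sc (eps x) u"
proof -
  have "sum_list (map (\<lambda>(m, c). sc (eps c) m) (ad x)) = D (\<lambda>p a3. D (\<lambda>a1 a2. sc (eps a2) (bu a1 (T a3))) p) x"
    by (simp add: adL_conv)
  also have "\<dots> = D (\<lambda>a1 a3. bu a1 (T a3)) x" by (simp add: sweedler_simps)
  also have "\<dots> = sc (eps x) u" by (rule bul_antipode_right)
  finally show ?thesis .
qed

lemma cop_mul_braided:
  "teq2 sc (cop (mul x y))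
     [(mul x1 (hit m y1), mul x20 y2). (x1, x2) \<leftarrow> cop x, (m, x20) \<leftarrow> ad x2, (y1, y2) \<leftarrow> cop y]"
  unfolding teq2_def
proof (intro allI impI)
  fix f :: "'h \<Rightarrow> 'h \<Rightarrow> 'k" assume f: "bilin sc sc (*) f"
  have "D f (mul x y) = D (\<lambda>x1 x2. D (\<lambda>p a3. D (\<lambda>a1 a2. E (\<lambda>y1 y2.
      f (mul x1 (hit (bu a1 (T a3)) y1)) (mul a2 y2)) y) p) x2) x"
    by (simp add: lhit_simps bilin_simps[OF f] swsum_mul[OF vector_space_field] hit_hit[symmetric])
  then show "sum_list (map (\<lambda>(a, b). f a b) (cop (mul x y)))
      = sum_list (map (\<lambda>(a, b). f a b)
          [(mul x1 (hit m y1), mul x20 y2). (x1, x2) \<leftarrow> cop x, (m, x20) \<leftarrow> ad x2, (y1, y2) \<leftarrow> cop y])"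
    by (simp add: adL_conv)
qed

lemma adL_S: "teq2 sc (ad (S x)) [(m, S c). (m, c) \<leftarrow> ad x]"
  unfolding teq2_def using adL_S_core by (simp add: adL_conv)

lemma yd_module: "ll_yd_module sc bu u cop eps T hit ad"
  unfolding ll_yd_module_def using bil_hit hit_hit tlin_adL adL_coassoc adL_counit adL_hit by simp

lemma hopf_monoid: "hopf_monoid_in_yd sc bu u cop eps hit ad mul u cop eps S"
  unfolding hopf_monoid_in_yd_def
  using algebra coalgebra hit_mul hit_unit_right cop_hit eps_hit adL_mul adL_unit adL_cop adL_eps
    eps_mul cop_unit cop_mul_braided lin_S S_hit adL_S antipode_right antipode_left
  by simp

lemma braiding_adL: "[(hit m b, a0). (m, a0) \<leftarrow> ad a] = [(hit a1 (\<beta> a3 b), a2). (a1, a2, a3) \<leftarrow> cop3 cop a]"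
  by (simp add: adL_def o_def split_def hit_hit[symmetric])

end

theorem theorem3:
  fixes sc :: "'k::field \<Rightarrow> 'h::ab_group_add \<Rightarrow> 'h"
    and mul :: "'h \<Rightarrow> 'h \<Rightarrow> 'h" and u :: 'h
    and cop :: "'h \<Rightarrow> ('h \<times> 'h) list" and eps :: "'h \<Rightarrow> 'k"
    and S :: "'h \<Rightarrow> 'h" and hit :: "'h \<Rightarrow> 'h \<Rightarrow> 'h" and \<beta> :: "'h \<Rightarrow> 'h \<Rightarrow> 'h"
  assumes "yd_post_hopf sc mul u cop eps S hit \<beta>"
  shows "ll_yd_module sc (bul mul cop hit) u cop eps (Sh cop S \<beta>) hit (adL mul cop S hit \<beta>)
    \<and> hopf_monoid_in_yd sc (bul mul cop hit) u cop eps hit (adL mul cop S hit \<beta>) mul u cop eps S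
    \<and> (\<forall>a b. teq2 sc [(hit m b, a0). (m, a0) \<leftarrow> adL mul cop S hit \<beta> a]
                       [(hit a1 (\<beta> a3 b), a2). (a1, a2, a3) \<leftarrow> cop3 cop a])"
proof -
  interpret yd_post_hopf_algebra sc mul u cop eps S hit \<beta> by unfold_locales (fact assms)
  show ?thesis using yd_module hopf_monoid braiding_adL by (simp add: teq2_def)
qed

end
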